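(* Let $d_{\mathrm{in}},d_{\mathrm{out}}\in\mathbb N$, $\Omega\subset\mathbb R^{d_{\mathrm{in}}}$, $\mu$ a measure on $\Omega$ with $C_p(\Omega,\mu)<\infty$, $\|\cdot\|$ a norm on $\mathbb R^{d_{\mathrm{out}}}$, $p,q\in[1,\infty]$, and $\mathcal F=L^p(\Omega\to(\mathbb R^{d_{\mathrm{out}}},\|\cdot\|),\mu)$. (i) There exists a constant $c>0$ (depending only on $\Omega,\mu,p,q,\|\cdot\|$) such that for every architecture $(L,\mathbf N)$ with $N_0=d_{\mathrm{in}}$, $N_L=d_{\mathrm{out}}$, of width $W=\max_{0\le\ell\le L}N_\ell$, and every $r\ge1$, $$\|R_\theta-R_{\theta'}\|_{p,\|\cdot\|}\le c\,W L^2 r^{L-1}\|\theta-\theta'\|_\infty\qquad\text{for all }\theta,\theta'\in\Theta^q_{L,\mathbf N}(r).$$ In particular, if $\Omega=[-D,D]^d$ ($D>0$, $d=d_{\mathrm{in}}$) and $\mu$ is the Lebesgue measure, this holds with $c=Dd^{1/q}+1$ when $p=\infty$ and $\|\cdot\|=\|\cdot\|_q$, and with $c=(D+1)(2D)^{d/p}$ when $\|\cdot\|=\|\cdot\|_\infty$ and $q=\infty$. (ii) Conversely, assume $\Omega\subseteq\mathbb R_+^{d_{\mathrm{in}}}$ (where $\mathbb R_+=[0,\infty)$), $\|\cdot\|=\|\cdot\|_q$, and $\mu(\{x\in\Omega: x_1\neq0\})>0$, and either $p=\infty$, or $1\le p<\infty$ and we restrict to architectures with $N_0=\min_{0\le\ell\le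 L}N_\ell$. Then there is a constant $c'>0$ independent of the architecture and of $r$ such that for every such architecture $(L,\mathbf N)$ (with $N_0=d_{\mathrm{in}}$, $N_L=d_{\mathrm{out}}$), every $r\ge1$ and every $\varepsilon>0$, there exist $\theta\neq\theta'$ in $\Theta^q_{L,\mathbf N}(r)$ with $$\|R_\theta-R_{\theta'}\|_{p,\|\cdot\|}\ge(1-\varepsilon)\,c'\,L\,r^{L-1}\|\theta-\theta'\|_\infty.$$
   Context: ReLU $\rho(x)=\max(0,x)$ coordinatewise. Architecture $(L,\mathbf N)$, $\mathbf N=(N_0,\dots,N_L)$, width $W=\max_\ell N_\ell$; parameters $\theta=(W_1,\dots,W_L,b_1,\dots,b_L)$, $W_\ell\in\mathbb R^{N_\ell\times N_{\ell-1}}$, $b_\ell\in\mathbb R^{N_\ell}$, forming $\Theta_{L,\mathbf N}$; $\|\theta\|_\infty$ is the largest absolute value of a coordinate of $\theta$. Realization: $R_\theta(x)=W_Ly_{L-1}(x)+b_L$, $y_0(x)=x$, $y_\ell(x)=\rho(W_\ell y_{\ell-1}(x)+b_\ell)$ for $1\le\ell\le L-1$. For a matrix $M$, $\|M\|_{q\to q}=\sup_{x\ne0}\|Mx\|_q/\|x\|_q$ is the operator norm. $\Theta^q_{L,\mathbf N}(r)=\{\theta\in\Theta_{L,\mathbf N}:\|W_\ell\|_{q\to q}\le r,\ \|b_\ell\|_q\le r,\ \ell=1,\dots,L\}$. $\|f\|_{p,\|\cdot\|}=(\int_\Omega\|f(x)\|^pd\mu)^{1/p}$ for $p<\infty$,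 $\operatorname{ess\,sup}_\Omega\|f(x)\|$ for $p=\infty$. $C_p(\Omega,\mu)=(\int_\Omega(\|x\|_\infty+1)^pd\mu)^{1/p}$ for $p<\infty$ and $\operatorname{ess\,sup}_\Omega\|x\|_\infty$ for $p=\infty$. *)

theory Defs
  imports "HOL-Analysis.Analysis" "HOL-Probability.Probability"
begin

text \<open>A vector of R^n is a function nat => real; only indices i < n matter
  and vectors produced below are zero outside {..<n}. Inputs x in Omega are functions nat => real whose coordinates below d_in
  are the coordinates of the point (Omega lies in the extensional product space).\<close>

type_synonym vec = "nat \<Rightarrow> real"

definition inv_exp :: "ereal \<Rightarrow> real" where
  "inv_exp q = (if q = \<infinity> then 0 else 1 / real_of_ereal q)"

definition qnorm :: "nat \<Rightarrow> ereal \<Rightarrow> vec \<Rightarrow> real" where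
  "qnorm d q x = (if q = \<infinity> then Max (insert 0 {\<bar>x i\<bar> | i. i < d})
                  else (\<Sum>i<d. \<bar>x i\<bar> powr real_of_ereal q) powr (1 / real_of_ereal q))"

definition is_norm_on :: "nat \<Rightarrow> (vec \<Rightarrow> real) \<Rightarrow> bool" where
  "is_norm_on d nrm \<longleftrightarrow>
     (\<forall>x y. (\<forall>i\<ge>d. x i = 0) \<longrightarrow> (\<forall>i\<ge>d. y i = 0) \<longrightarrow>
        nrm (\<lambda>i. x i + y i) \<le> nrm x + nrm y) \<and>
     (\<forall>x c. (\<forall>i\<ge>d. x i = 0) \<longrightarrow> nrm (\<lambda>i. c * x i) = \<bar>c\<bar> * nrm x) \<and>
     (\<forall>x. (\<forall>i\<ge>d. x i = 0) \<longrightarrow> nrm x \<ge> 0 \<and> (nrm x = 0 \<longleftrightarrow> x = (\<lambda>_. 0)))"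

definition matvec :: "nat \<Rightarrow> nat \<Rightarrow> (nat \<Rightarrow> nat \<Rightarrow> real) \<Rightarrow> vec \<Rightarrow> vec" where
  "matvec m n A x = (\<lambda>i. if i < m then (\<Sum>j<n. A i j * x j) else 0)"

definition opnorm :: "ereal \<Rightarrow> nat \<Rightarrow> nat \<Rightarrow> (nat \<Rightarrow> nat \<Rightarrow> real) \<Rightarrow> real" where
  "opnorm q m n A = Sup {qnorm m q (matvec m n A x) / qnorm n q x | x.
                          (\<forall>i\<ge>n. x i = 0) \<and> x \<noteq> (\<lambda>_. 0)}"

text \<open>Parameters: weights W l i j (layer l, row i, column j) and biases b l i.\<close>
type_synonym params = "(nat \<Rightarrow> nat \<Rightarrow> nat \<Rightarrow> real) \<times> (nat \<Rightarrow> nat \<Rightarrow> real)"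

definition arch :: "nat \<Rightarrow> (nat \<Rightarrow> nat) \<Rightarrow> nat \<Rightarrow> nat \<Rightarrow> bool" where
  "arch L N din dout \<longleftrightarrow> L \<ge> 1 \<and> (\<forall>l\<le>L. N l \<ge> 1) \<and> N 0 = din \<and> N L = dout"

definition width :: "nat \<Rightarrow> (nat \<Rightarrow> nat) \<Rightarrow> nat" where
  "width L N = Max {N l | l. l \<le> L}"

definition param_space :: "nat \<Rightarrow> (nat \<Rightarrow> nat) \<Rightarrow> params set" where
  "param_space L N = {(W, b).
      (\<forall>l i j. W l i j \<noteq> 0 \<longrightarrow> 1 \<le> l \<and> l \<le> L \<and> i < N l \<and> j < N (l - 1)) \<and>
      (\<forall>l i. b l i \<noteq> 0 \<longrightarrow> 1 \<le> l \<and> l \<le> L \<and> i < N l)}"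

definition param_sup :: "nat \<Rightarrow> (nat \<Rightarrow> nat) \<Rightarrow> params \<Rightarrow> real" where
  "param_sup L N \<theta> =
     Max ({\<bar>fst \<theta> l i j\<bar> | l i j. 1 \<le> l \<and> l \<le> L \<and> i < N l \<and> j < N (l - 1)} \<union>
          {\<bar>snd \<theta> l i\<bar> | l i. 1 \<le> l \<and> l \<le> L \<and> i < N l})"

definition param_diff :: "params \<Rightarrow> params \<Rightarrow> params" where
  "param_diff \<theta> \<theta>' = ((\<lambda>l i j. fst \<theta> l i j - fst \<theta>' l i j), (\<lambda>l i. snd \<theta> l i - snd \<theta>' l i))"

definition param_ball :: "ereal \<Rightarrow> nat \<Rightarrow> (nat \<Rightarrow> nat) \<Rightarrow> real \<Rightarrow> params set" where
  "param_ball q L N r = {\<theta> \<in> param_space L N.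
      \<forall>l. 1 \<le> l \<and> l \<le> L \<longrightarrow>
        opnorm q (N l) (N (l - 1)) (fst \<theta> l) \<le> r \<and> qnorm (N l) q (snd \<theta> l) \<le> r}"

definition affine :: "(nat \<Rightarrow> nat) \<Rightarrow> params \<Rightarrow> nat \<Rightarrow> vec \<Rightarrow> vec" where
  "affine N \<theta> l y = (\<lambda>i. if i < N l then (\<Sum>j<N (l - 1). fst \<theta> l i j * y j) + snd \<theta> l i else 0)"

fun hidden :: "(nat \<Rightarrow> nat) \<Rightarrow> params \<Rightarrow> vec \<Rightarrow> nat \<Rightarrow> vec" where
  "hidden N \<theta> x 0 = (\<lambda>i. if i < N 0 then x i else 0)"
| "hidden N \<theta> x (Suc l) = (\<lambda>i. max 0 (affine N \<theta> (Suc l) (hidden N \<theta> x l) i))"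

definition realize :: "nat \<Rightarrow> (nat \<Rightarrow> nat) \<Rightarrow> params \<Rightarrow> vec \<Rightarrow> vec" where
  "realize L N \<theta> x = affine N \<theta> L (hidden N \<theta> x (L - 1))"

definition lp_norm :: "'a measure \<Rightarrow> ereal \<Rightarrow> (vec \<Rightarrow> real) \<Rightarrow> ('a \<Rightarrow> vec) \<Rightarrow> ennreal" where
  "lp_norm M p nrm f =
     (if p = \<infinity> then esssup M (\<lambda>x. ennreal (nrm (f x)))
      else (let I = (\<integral>\<^sup>+ x. ennreal (nrm (f x) powr real_of_ereal p) \<partial>M)
            in if I = \<infinity> then \<infinity> else ennreal (enn2real I powr (1 / real_of_ereal p))))"

definition Cp :: "nat \<Rightarrow> vec measure \<Rightarrow> ereal \<Rightarrow> ennreal" where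
  "Cp din M p =
     (if p = \<infinity> then esssup M (\<lambda>x. ennreal (qnorm din \<infinity> x))
      else (let I = (\<integral>\<^sup>+ x. ennreal ((qnorm din \<infinity> x + 1) powr real_of_ereal p) \<partial>M)
            in if I = \<infinity> then \<infinity> else ennreal (enn2real I powr (1 / real_of_ereal p))))"

definition admissible_measure :: "nat \<Rightarrow> vec measure \<Rightarrow> bool" where
  "admissible_measure din M \<longleftrightarrow>
     space M \<subseteq> space (PiM {..<din} (\<lambda>_. borel)) \<and>
     sets (restrict_space (PiM {..<din} (\<lambda>_. borel)) (space M)) \<subseteq> sets M"

definition cube_lebesgue :: "nat \<Rightarrow> real \<Rightarrow> vec measure" where
  "cube_lebesgue d D = restrict_space (PiM {..<d} (\<lambda>_. lborel)) (PiE {..<d} (\<lambda>_. {-D..D}))"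

end

theory Submission
  imports Defs
begin

text \<open>Upper bound: ReLU is 1-Lipschitz and every layer has operator norm at most \<open>r\<close>, so by
  induction over the layers the hidden states grow like \<open>r ^ l * (\<parallel>x\<parallel>_q + l)\<close>, while the discrepancy
  between two parametrizations is multiplied by \<open>r\<close> per layer and picks up
  \<open>W * \<parallel>\<theta> - \<theta>'\<parallel>_\<infinity>\<close> times the size of the incoming state. Summing gives the pointwise bound
  \<open>W L^2 r^(L-1) \<parallel>\<theta> - \<theta>'\<parallel>_\<infinity> (\<parallel>x\<parallel>_q + 1)\<close>; comparing \<open>\<parallel>\<cdot>\<parallel>\<close> with \<open>\<parallel>\<cdot>\<parallel>_q\<close> and integrating
  against \<open>\<mu>\<close> produces \<open>C_p(\<Omega>, \<mu>)\<close>.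

  Lower bound: let every layer multiply the first coordinate by \<open>a\<close> and discard the others. For
  \<open>a = r\<close> and \<open>a = r - \<delta>\<close>, \<open>\<delta> = r / (2L)\<close>, the parameters differ by \<open>\<delta>\<close> in sup norm and the
  realizations by \<open>(r^L - (r - \<delta>)^L) x_1 \<ge> L r^(L-1) \<delta> x_1 / 2\<close>, which on \<open>\<Omega> \<subseteq> R_+^d\<close> has
  \<open>L^p\<close>-norm a fixed positive multiple of \<open>L r^(L-1) \<delta>\<close>.\<close>

section \<open>q-norms on finite-dimensional vectors\<close>

lemma one_le_real_of_ereal: "1 \<le> q \<Longrightarrow> q \<noteq> \<infinity> \<Longrightarrow> 1 \<le> real_of_ereal q"
  by (cases q) auto

lemma inv_exp_bounds: "1 \<le> q \<Longrightarrow> 0 \<le> inv_exp q \<and> inv_exp q \<le> 1"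
  using one_le_real_of_ereal[of q] by (auto simp: inv_exp_def)

lemma powr_inv_exp_le_self: "1 \<le> q \<Longrightarrow> real n powr inv_exp q \<le> real n"
  using inv_exp_bounds[of q] powr_mono[of "inv_exp q" 1 "real n"] by (cases "n = 0") auto

lemma convex_on_powr_nonneg:
  assumes Q: "1 \<le> (Q::real)"
  shows "convex_on {0..} (\<lambda>x. x powr Q)"
proof (rule convex_onI)
  show "convex {0::real..}" by simp
  fix t x y :: real assume t: "0 < t" "t < 1" and xy: "x \<in> {0..}" "y \<in> {0..}"
  have tp: "t powr Q \<le> t" "(1-t) powr Q \<le> 1-t" using powr_le_one_le t Q by auto
  show "((1 - t) *\<^sub>R x + t *\<^sub>R y) powr Q \<le> (1 - t) * x powr Q + t * y powr Q"
  proof (cases "x = 0 \<or> y = 0")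
    case True
    then show ?thesis using tp xy t by (auto simp: powr_mult mult_right_mono)
  next
    case False
    then have "x \<in> {0<..}" "y \<in> {0<..}" using xy by auto
    with convex_onD[OF powr_convex[OF Q], of t x y] t show ?thesis by simp
  qed
qed

lemma qnorm_finite: "q \<noteq> \<infinity> \<Longrightarrow> qnorm n q x = (\<Sum>i<n. \<bar>x i\<bar> powr real_of_ereal q) powr (1 / real_of_ereal q)"
  by (simp add: qnorm_def)

lemma qnorm_infinity: "qnorm n \<infinity> x = Max (insert 0 ((\<lambda>i. \<bar>x i\<bar>) ` {..<n}))"
proof -
  have "{\<bar>x i\<bar> | i. i < n} = (\<lambda>i. \<bar>x i\<bar>) ` {..<n}" by auto
  then show ?thesis by (simp add: qnorm_def)
qed

lemma qnorm_nonneg: "0 \<le> qnorm n q x"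
  by (cases "q = \<infinity>") (auto simp: qnorm_finite qnorm_infinity intro: Max_ge)

lemma qnorm_cong: "(\<And>i. i < n \<Longrightarrow> x i = y i) \<Longrightarrow> qnorm n q x = qnorm n q y"
  by (cases "q = \<infinity>") (auto simp: qnorm_finite qnorm_infinity intro!: sum.cong arg_cong[where f=Max] image_cong)

lemma qnorm_mono:
  assumes q: "1 \<le> q" and le: "\<And>i. i < n \<Longrightarrow> \<bar>x i\<bar> \<le> \<bar>y i\<bar>"
  shows "qnorm n q x \<le> qnorm n q y"
proof (cases "q = \<infinity>")
  case True
  have "Max (insert 0 ((\<lambda>i. \<bar>x i\<bar>) ` {..<n})) \<le> Max (insert 0 ((\<lambda>i. \<bar>y i\<bar>) ` {..<n}))"
    using le by (intro Max.boundedI) (auto intro: order_trans[OF _ Max_ge])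
  then show ?thesis by (simp add: True qnorm_infinity)
next
  case False
  show ?thesis unfolding qnorm_finite[OF False]
    using one_le_real_of_ereal[OF q False] by (intro powr_mono2 sum_mono) (auto simp: le intro: sum_nonneg)
qed

lemma abs_le_qnorm:
  assumes q: "1 \<le> q" and i: "i < n"
  shows "\<bar>x i\<bar> \<le> qnorm n q x"
proof (cases "q = \<infinity>")
  case True
  then show ?thesis using i by (auto simp: qnorm_infinity intro!: Max_ge)
next
  case False
  define Q where "Q = real_of_ereal q"
  have Q: "1 \<le> Q" using one_le_real_of_ereal[OF q False] Q_def by simp
  have "\<bar>x i\<bar> = (\<bar>x i\<bar> powr Q) powr (1/Q)" using Q by (simp add: powr_powr)
  also have "\<dots> \<le> (\<Sum>i<n. \<bar>x i\<bar> powr Q) powr (1/Q)"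
    using Q i by (intro powr_mono2) (auto intro!: member_le_sum)
  finally show ?thesis by (simp only: qnorm_finite[OF False] Q_def)
qed

lemma qnorm_le_entry_bound:
  assumes q: "1 \<le> q" and a: "0 \<le> a" and b: "\<And>i. i < n \<Longrightarrow> \<bar>x i\<bar> \<le> a"
  shows "qnorm n q x \<le> real n powr inv_exp q * a"
proof (cases "n = 0 \<or> q = \<infinity>")
  case True
  have "Max (insert 0 ((\<lambda>i. \<bar>x i\<bar>) ` {..<n})) \<le> a"
    using a b by (intro Max.boundedI) auto
  then show ?thesis using True by (auto simp: qnorm_infinity qnorm_finite inv_exp_def)
next
  case False
  define Q where "Q = real_of_ereal q"
  have Q: "1 \<le> Q" using one_le_real_of_ereal[OF q] False Q_def by simp
  have "(\<Sum>i<n. \<bar>x i\<bar> powr Q) \<le> real n * a powr Q"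
    using sum_mono[of "{..<n}" "\<lambda>i. \<bar>x i\<bar> powr Q" "\<lambda>_. a powr Q"] b Q by (simp add: powr_mono2)
  then have "(\<Sum>i<n. \<bar>x i\<bar> powr Q) powr (1/Q) \<le> (real n * a powr Q) powr (1/Q)"
    using Q by (intro powr_mono2) (auto intro: sum_nonneg)
  also have "\<dots> = real n powr (1/Q) * a"
    using Q a by (simp add: powr_mult powr_powr)
  finally show ?thesis using False by (simp add: qnorm_finite inv_exp_def Q_def)
qed

lemma qnorm_eq_0: "1 \<le> q \<Longrightarrow> (\<And>i. i < n \<Longrightarrow> x i = 0) \<Longrightarrow> qnorm n q x = 0"
  using qnorm_le_entry_bound[of q 0 n x] qnorm_nonneg[of n q x] by simp

lemma qnorm_pos: "1 \<le> q \<Longrightarrow> i < n \<Longrightarrow> x i \<noteq> 0 \<Longrightarrow> 0 < qnorm n q x"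
  using abs_le_qnorm[of q i n x] by simp

lemma qnorm_le_card_sum:
  assumes q: "1 \<le> q"
  shows "qnorm n q x \<le> real n * (\<Sum>i<n. \<bar>x i\<bar>)"
proof -
  have "qnorm n q x \<le> real n powr inv_exp q * (\<Sum>i<n. \<bar>x i\<bar>)"
    by (rule qnorm_le_entry_bound[OF q]) (auto intro: sum_nonneg member_le_sum)
  also have "\<dots> \<le> real n * (\<Sum>i<n. \<bar>x i\<bar>)"
    using powr_inv_exp_le_self[OF q] by (intro mult_right_mono sum_nonneg) auto
  finally show ?thesis .
qed

lemma qnorm_le_qnorm_infinity:
  assumes q: "1 \<le> q"
  shows "qnorm n q x \<le> real n * qnorm n \<infinity> x"
proof -
  have "qnorm n q x \<le> real n powr inv_exp q * qnorm n \<infinity> x"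
    by (rule qnorm_le_entry_bound[OF q qnorm_nonneg]) (simp add: abs_le_qnorm)
  also have "\<dots> \<le> real n * qnorm n \<infinity> x"
    using powr_inv_exp_le_self[OF q] by (intro mult_right_mono qnorm_nonneg)
  finally show ?thesis .
qed

text \<open>Jensen's inequality for the power mean, with uniform weights.\<close>
lemma sum_abs_le_qnorm:
  assumes q: "1 \<le> q"
  shows "(\<Sum>i<n. \<bar>x i\<bar>) \<le> real n powr (1 - inv_exp q) * qnorm n q x"
proof (cases "n = 0 \<or> q = \<infinity>")
  case True
  have "(\<Sum>i<n. \<bar>x i\<bar>) \<le> real (card {..<n}) * qnorm n q x"
    by (rule sum_bounded_above) (use q in \<open>auto intro: abs_le_qnorm\<close>)
  then show ?thesis using True by (auto simp: inv_exp_def)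
next
  case False
  define Q where "Q = real_of_ereal q"
  have Q: "1 \<le> Q" using one_le_real_of_ereal[OF q] False Q_def by simp
  define T where "T = (\<Sum>i<n. \<bar>x i\<bar> powr Q)"
  have n: "0 < real n" using False by simp
  have "(\<Sum>i<n. (1 / real n) *\<^sub>R \<bar>x i\<bar>) powr Q \<le> (\<Sum>i<n. (1/real n) * \<bar>x i\<bar> powr Q)"
    by (rule convex_on_sum[OF _ _ convex_on_powr_nonneg[OF Q]]) (use False in auto)
  then have "((\<Sum>i<n. \<bar>x i\<bar>) / real n) powr Q \<le> T / real n"
    by (simp add: T_def sum_divide_distrib[symmetric] sum_distrib_left[symmetric])
  then have "(((\<Sum>i<n. \<bar>x i\<bar>) / real n) powr Q) powr (1/Q) \<le> (T / real n) powr (1/Q)"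
    using Q by (intro powr_mono2) auto
  then have "(\<Sum>i<n. \<bar>x i\<bar>) / real n \<le> T powr (1/Q) / real n powr (1/Q)"
    using Q by (simp add: powr_powr powr_divide sum_nonneg)
  then have "(\<Sum>i<n. \<bar>x i\<bar>) \<le> real n * (T powr (1/Q) / real n powr (1/Q))"
    using n by (simp add: field_simps)
  also have "\<dots> = real n powr (1 - 1/Q) * T powr (1/Q)"
    using n by (simp add: powr_diff)
  finally show ?thesis using False by (simp add: qnorm_finite inv_exp_def Q_def T_def)
qed

lemma qnorm_triangle_infinity: "qnorm n \<infinity> (\<lambda>i. x i + y i) \<le> qnorm n \<infinity> x + qnorm n \<infinity> y"
proof -
  have "\<bar>x i + y i\<bar> \<le> qnorm n \<infinity> x + qnorm n \<infinity> y" if "i < n" for i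
    using abs_le_qnorm[of \<infinity> i n x] abs_le_qnorm[of \<infinity> i n y] that by simp
  then show ?thesis
    using qnorm_le_entry_bound[of \<infinity> "qnorm n \<infinity> x + qnorm n \<infinity> y" n "\<lambda>i. x i + y i"]
      qnorm_nonneg[of n \<infinity> x] qnorm_nonneg[of n \<infinity> y]
    by (cases "n = 0") (auto simp: inv_exp_def)
qed

text \<open>Minkowski's inequality, via convexity of \<open>t \<mapsto> t powr Q\<close> applied to the convex
  combination \<open>(\<bar>x i\<bar> + \<bar>y i\<bar>) / (a + b)\<close> of \<open>\<bar>x i\<bar> / a\<close> and \<open>\<bar>y i\<bar> / b\<close>, where \<open>a, b\<close> are the norms.\<close>
lemma qnorm_triangle_finite:
  assumes q: "1 \<le> q" "q \<noteq> \<infinity>" and a: "0 < qnorm n q x" and b: "0 < qnorm n q y"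
  shows "qnorm n q (\<lambda>i. x i + y i) \<le> qnorm n q x + qnorm n q y"
proof -
  define Q where "Q = real_of_ereal q"
  have Q: "1 \<le> Q" using one_le_real_of_ereal[OF q] Q_def by simp
  define a b where "a = qnorm n q x" and "b = qnorm n q y"
  note a = a[folded a_def] and b = b[folded b_def]
  define t where "t = a / (a + b)"
  have t: "0 \<le> t" "t \<le> 1" "1 - t = b / (a + b)" using a b by (auto simp: t_def field_simps)
  have sums: "(\<Sum>i<n. \<bar>x i\<bar> powr Q) = a powr Q" "(\<Sum>i<n. \<bar>y i\<bar> powr Q) = b powr Q"
    using Q unfolding a_def b_def qnorm_finite[OF q(2)] Q_def[symmetric] by (simp_all add: powr_powr sum_nonneg)
  have pointwise: "\<bar>x i + y i\<bar> powr Q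
      \<le> (a + b) powr Q * (t * (\<bar>x i\<bar> powr Q / a powr Q) + (1 - t) * (\<bar>y i\<bar> powr Q / b powr Q))" for i
  proof -
    have comb: "\<bar>x i\<bar> + \<bar>y i\<bar> = (a + b) * ((1 - t) *\<^sub>R (\<bar>y i\<bar> / b) + t *\<^sub>R (\<bar>x i\<bar> / a))"
    proof -
      have "(a + b) * (b / (a + b) * (\<bar>y i\<bar> / b)) = \<bar>y i\<bar>" "(a + b) * (a / (a + b) * (\<bar>x i\<bar> / a)) = \<bar>x i\<bar>"
        using a b by simp_all
      then show ?thesis unfolding t(3) by (simp add: t_def distrib_left)
    qed
    have "\<bar>x i + y i\<bar> powr Q \<le> (\<bar>x i\<bar> + \<bar>y i\<bar>) powr Q"
      using Q by (intro powr_mono2) auto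
    also have "\<dots> = (a + b) powr Q * ((1 - t) *\<^sub>R (\<bar>y i\<bar> / b) + t *\<^sub>R (\<bar>x i\<bar> / a)) powr Q"
      by (subst comb) (simp add: powr_mult)
    also have "\<dots> \<le> (a + b) powr Q * ((1 - t) * (\<bar>y i\<bar> / b) powr Q + t * (\<bar>x i\<bar> / a) powr Q)"
      using convex_onD[OF convex_on_powr_nonneg[OF Q], of t "\<bar>y i\<bar> / b" "\<bar>x i\<bar> / a"] t a b
      by (intro mult_left_mono) auto
    finally show ?thesis unfolding powr_divide by (simp add: algebra_simps)
  qed
  have "(\<Sum>i<n. \<bar>x i + y i\<bar> powr Q)
      \<le> (\<Sum>i<n. (a + b) powr Q * (t * (\<bar>x i\<bar> powr Q / a powr Q) + (1 - t) * (\<bar>y i\<bar> powr Q / b powr Q)))"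
    by (intro sum_mono pointwise)
  also have "\<dots> = (a + b) powr Q * (t * ((\<Sum>i<n. \<bar>x i\<bar> powr Q) / a powr Q) + (1 - t) * ((\<Sum>i<n. \<bar>y i\<bar> powr Q) / b powr Q))"
    by (simp add: sum_distrib_left sum_divide_distrib sum.distrib algebra_simps)
  also have "\<dots> = (a + b) powr Q" using a b by (simp add: sums)
  finally have "(\<Sum>i<n. \<bar>x i + y i\<bar> powr Q) powr (1/Q) \<le> ((a + b) powr Q) powr (1/Q)"
    using Q by (intro powr_mono2) (auto intro: sum_nonneg)
  also have "\<dots> = a + b" using Q a b by (simp add: powr_powr)
  finally show ?thesis by (simp only: qnorm_finite[OF q(2)] Q_def a_def b_def)
qed

lemma qnorm_triangle:
  assumes q: "1 \<le> q"
  shows "qnorm n q (\<lambda>i. x i + y i) \<le> qnorm n q x + qnorm n q y"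
proof (cases "q = \<infinity>")
  case True
  then show ?thesis by (simp add: qnorm_triangle_infinity)
next
  case False
  consider "qnorm n q x = 0" | "qnorm n q y = 0" | "0 < qnorm n q x" "0 < qnorm n q y"
    using qnorm_nonneg[of n q x] qnorm_nonneg[of n q y] by linarith
  then show ?thesis
  proof cases
    case 1
    then have "qnorm n q (\<lambda>i. x i + y i) = qnorm n q y"
      using abs_le_qnorm[OF q, of _ n x] by (intro qnorm_cong) fastforce
    with 1 show ?thesis by simp
  next
    case 2
    then have "qnorm n q (\<lambda>i. x i + y i) = qnorm n q x"
      using abs_le_qnorm[OF q, of _ n y] by (intro qnorm_cong) fastforce
    with 2 show ?thesis by simp
  qed (rule qnorm_triangle_finite[OF q False])
qed

lemma qnorm_minus_commute: "qnorm n q (\<lambda>i. x i - y i) = qnorm n q (\<lambda>i. y i - x i)"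
  by (cases "q = \<infinity>") (simp_all add: qnorm_finite qnorm_infinity abs_minus_commute)

lemma qnorm_Lipschitz:
  assumes q: "1 \<le> q"
  shows "\<bar>qnorm n q x - qnorm n q y\<bar> \<le> real n * (\<Sum>i<n. \<bar>x i - y i\<bar>)"
proof -
  have "qnorm n q x \<le> qnorm n q y + qnorm n q (\<lambda>i. x i - y i)"
    using qnorm_triangle[OF q, of n y "\<lambda>i. x i - y i"] by simp
  moreover have "qnorm n q y \<le> qnorm n q x + qnorm n q (\<lambda>i. x i - y i)"
    using qnorm_triangle[OF q, of n x "\<lambda>i. y i - x i"] qnorm_minus_commute[of n q x y] by simp
  moreover have "qnorm n q (\<lambda>i. x i - y i) \<le> real n * (\<Sum>i<n. \<bar>x i - y i\<bar>)"
    using qnorm_le_card_sum[OF q] by simp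
  ultimately show ?thesis by linarith
qed

lemma qnorm_first_coordinate:
  assumes q: "1 \<le> q" and n: "1 \<le> n"
  shows "qnorm n q (\<lambda>i. if i = 0 then c else 0) = \<bar>c\<bar>"
proof (rule antisym)
  show "\<bar>c\<bar> \<le> qnorm n q (\<lambda>i. if i = 0 then c else 0)"
    using abs_le_qnorm[OF q, of 0 n "\<lambda>i. if i = 0 then c else 0"] n by simp
  show "qnorm n q (\<lambda>i. if i = 0 then c else 0) \<le> \<bar>c\<bar>"
  proof (cases "q = \<infinity>")
    case True
    show ?thesis unfolding True qnorm_infinity by (rule Max.boundedI) auto
  next
    case False
    define Q where "Q = real_of_ereal q"
    have Q: "1 \<le> Q" using one_le_real_of_ereal[OF q False] Q_def by simp
    have "(\<Sum>i<n. \<bar>if i = 0 then c else 0\<bar> powr Q) = (\<Sum>i<n. if i = 0 then \<bar>c\<bar> powr Q else 0)"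
      using Q by (intro sum.cong) auto
    also have "\<dots> = \<bar>c\<bar> powr Q" using n by (simp add: sum.delta)
    finally show ?thesis using Q by (simp add: qnorm_finite[OF False] Q_def[symmetric] powr_powr)
  qed
qed

section \<open>Matrices and affine layers\<close>

lemma qnorm_matvec_le_abs_sum:
  assumes q: "1 \<le> q"
  shows "qnorm m q (matvec m n A x) \<le> real m powr inv_exp q * (\<Sum>i<m. \<Sum>j<n. \<bar>A i j\<bar>) * qnorm n q x"
proof -
  have "qnorm m q (matvec m n A x) \<le> real m powr inv_exp q * ((\<Sum>i<m. \<Sum>j<n. \<bar>A i j\<bar>) * qnorm n q x)"
  proof (rule qnorm_le_entry_bound[OF q])
    show "0 \<le> (\<Sum>i<m. \<Sum>j<n. \<bar>A i j\<bar>) * qnorm n q x" by (simp add: qnorm_nonneg sum_nonneg)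
    fix i assume i: "i < m"
    have "\<bar>matvec m n A x i\<bar> \<le> (\<Sum>j<n. \<bar>A i j\<bar> * \<bar>x j\<bar>)"
      using i sum_abs[of "\<lambda>j. A i j * x j" "{..<n}"] by (simp add: matvec_def abs_mult)
    also have "\<dots> \<le> (\<Sum>j<n. \<bar>A i j\<bar>) * qnorm n q x"
      unfolding sum_distrib_right by (intro sum_mono mult_left_mono abs_le_qnorm[OF q]) auto
    also have "\<dots> \<le> (\<Sum>i<m. \<Sum>j<n. \<bar>A i j\<bar>) * qnorm n q x"
      using i by (intro mult_right_mono qnorm_nonneg member_le_sum[of i "{..<m}" "\<lambda>i. \<Sum>j<n. \<bar>A i j\<bar>"])
        (auto intro: sum_nonneg)
    finally show "\<bar>matvec m n A x i\<bar> \<le> (\<Sum>i<m. \<Sum>j<n. \<bar>A i j\<bar>) * qnorm n q x" .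
  qed
  then show ?thesis by (simp add: mult.assoc)
qed

lemma bdd_above_opnorm_quotients:
  assumes q: "1 \<le> q"
  shows "bdd_above {qnorm m q (matvec m n A x) / qnorm n q x | x. (\<forall>i\<ge>n. x i = 0) \<and> x \<noteq> (\<lambda>_. 0)}"
proof (rule bdd_aboveI, safe)
  fix x :: vec
  have "qnorm m q (matvec m n A x) \<le> real m powr inv_exp q * (\<Sum>i<m. \<Sum>j<n. \<bar>A i j\<bar>) * qnorm n q x"
    by (rule qnorm_matvec_le_abs_sum[OF q])
  then show "qnorm m q (matvec m n A x) / qnorm n q x \<le> real m powr inv_exp q * (\<Sum>i<m. \<Sum>j<n. \<bar>A i j\<bar>)"
    by (cases "qnorm n q x = 0")
      (simp_all add: divide_le_eq qnorm_nonneg sum_nonneg less_le)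
qed

lemma qnorm_matvec_le_opnorm:
  assumes q: "1 \<le> q" and A: "opnorm q m n A \<le> r" and r: "0 \<le> r"
  shows "qnorm m q (matvec m n A y) \<le> r * qnorm n q y"
proof -
  define z where "z = (\<lambda>i. if i < n then y i else 0)"
  have z: "matvec m n A y = matvec m n A z" "qnorm n q y = qnorm n q z"
    unfolding z_def matvec_def by (auto intro!: ext sum.cong qnorm_cong)
  show ?thesis
  proof (cases "z = (\<lambda>_. 0)")
    case True
    then have "qnorm m q (matvec m n A z) = 0"
      using q by (intro qnorm_eq_0) (simp_all add: matvec_def True)
    then show ?thesis using z r by (simp add: qnorm_nonneg)
  next
    case False
    then obtain i where "z i \<noteq> 0" by auto
    then have z_pos: "0 < qnorm n q z"
      using qnorm_pos[OF q, of i n z] by (auto simp: z_def split: if_splits)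
    have "qnorm m q (matvec m n A z) / qnorm n q z \<le> opnorm q m n A"
      unfolding opnorm_def using False
      by (intro cSup_upper bdd_above_opnorm_quotients[OF q]) (auto simp: z_def)
    then have "qnorm m q (matvec m n A z) \<le> r * qnorm n q z"
      using A z_pos by (simp add: divide_le_eq) (meson mult_right_mono order_trans less_imp_le)
    then show ?thesis using z by simp
  qed
qed

lemma qnorm_matvec_le_entrywise:
  assumes q: "1 \<le> q" and d: "0 \<le> \<delta>" and A: "\<And>i j. i < m \<Longrightarrow> j < n \<Longrightarrow> \<bar>A i j\<bar> \<le> \<delta>"
  shows "qnorm m q (matvec m n A y) \<le> real m powr inv_exp q * real n powr (1 - inv_exp q) * \<delta> * qnorm n q y"
proof -
  have "qnorm m q (matvec m n A y) \<le> real m powr inv_exp q * (real n powr (1 - inv_exp q) * \<delta> * qnorm n q y)"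
  proof (rule qnorm_le_entry_bound[OF q])
    show "0 \<le> real n powr (1 - inv_exp q) * \<delta> * qnorm n q y" using d qnorm_nonneg by auto
    fix i assume i: "i < m"
    have "\<bar>matvec m n A y i\<bar> \<le> (\<Sum>j<n. \<bar>A i j\<bar> * \<bar>y j\<bar>)"
      using i sum_abs[of "\<lambda>j. A i j * y j" "{..<n}"] by (simp add: matvec_def abs_mult)
    also have "\<dots> \<le> \<delta> * (\<Sum>j<n. \<bar>y j\<bar>)"
      unfolding sum_distrib_left using i A by (intro sum_mono mult_right_mono) auto
    also have "\<dots> \<le> \<delta> * (real n powr (1 - inv_exp q) * qnorm n q y)"
      using d by (intro mult_left_mono sum_abs_le_qnorm[OF q])
    finally show "\<bar>matvec m n A y i\<bar> \<le> real n powr (1 - inv_exp q) * \<delta> * qnorm n q y"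
      by (simp add: mult_ac)
  qed
  then show ?thesis by (simp add: mult_ac)
qed

lemma powr_mult_powr_le:
  assumes "1 \<le> m" "m \<le> W" "1 \<le> n" "n \<le> W" "0 \<le> a" "a \<le> 1"
  shows "(m::real) powr a * n powr (1 - a) \<le> W"
proof -
  have "m powr a * n powr (1 - a) \<le> W powr a * W powr (1 - a)"
    using assms by (intro mult_mono powr_mono2) auto
  also have "\<dots> = W" using assms by (simp add: powr_add[symmetric])
  finally show ?thesis .
qed

lemma affine_eq_matvec: "i < N l \<Longrightarrow> affine N \<theta> l y i = matvec (N l) (N (l - 1)) (fst \<theta> l) y i + snd \<theta> l i"
  by (simp add: affine_def matvec_def)

lemma qnorm_affine_le:
  assumes q: "1 \<le> q" and \<theta>: "\<theta> \<in> param_ball q L N r" and l: "1 \<le> l" "l \<le> L" and r: "0 \<le> r"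
  shows "qnorm (N l) q (affine N \<theta> l y) \<le> r * qnorm (N (l - 1)) q y + r"
proof -
  have "qnorm (N l) q (affine N \<theta> l y) = qnorm (N l) q (\<lambda>i. matvec (N l) (N (l - 1)) (fst \<theta> l) y i + snd \<theta> l i)"
    by (intro qnorm_cong affine_eq_matvec)
  also have "\<dots> \<le> qnorm (N l) q (matvec (N l) (N (l - 1)) (fst \<theta> l) y) + qnorm (N l) q (snd \<theta> l)"
    by (rule qnorm_triangle[OF q])
  also have "\<dots> \<le> r * qnorm (N (l - 1)) q y + r"
    using \<theta> l qnorm_matvec_le_opnorm[OF q _ r] by (intro add_mono) (auto simp: param_ball_def)
  finally show ?thesis .
qed

text \<open>The perturbation of the weights, a matrix with entries at most \<open>\<delta>\<close>, is estimated entrywise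
  rather than in operator norm; this is where the width enters the final bound.\<close>
lemma qnorm_affine_diff_le:
  assumes q: "1 \<le> q" and \<theta>: "\<theta> \<in> param_ball q L N r" and l: "1 \<le> l" "l \<le> L" and r: "0 \<le> r"
    and d: "0 \<le> \<delta>"
    and dW: "\<And>i j. i < N l \<Longrightarrow> j < N (l - 1) \<Longrightarrow> \<bar>fst \<theta> l i j - fst \<theta>' l i j\<bar> \<le> \<delta>"
    and db: "\<And>i. i < N l \<Longrightarrow> \<bar>snd \<theta> l i - snd \<theta>' l i\<bar> \<le> \<delta>"
    and W: "1 \<le> N l" "N l \<le> W" "1 \<le> N (l - 1)" "N (l - 1) \<le> W"
  shows "qnorm (N l) q (\<lambda>i. affine N \<theta> l y i - affine N \<theta>' l y' i)
           \<le> r * qnorm (N (l - 1)) q (\<lambda>i. y i - y' i) + real W * \<delta> * (qnorm (N (l - 1)) q y' + 1)"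
proof -
  define m n where "m = N l" and "n = N (l - 1)"
  define B where "B = (\<lambda>i j. fst \<theta> l i j - fst \<theta>' l i j)"
  define c where "c = (\<lambda>i. snd \<theta> l i - snd \<theta>' l i)"
  have e: "0 \<le> inv_exp q" "inv_exp q \<le> 1" using inv_exp_bounds[OF q] by auto
  have "qnorm m q (\<lambda>i. affine N \<theta> l y i - affine N \<theta>' l y' i)
      = qnorm m q (\<lambda>i. matvec m n (fst \<theta> l) (\<lambda>j. y j - y' j) i + (matvec m n B y' i + c i))"
    by (intro qnorm_cong)
       (simp add: affine_def matvec_def m_def n_def B_def c_def sum.distrib[symmetric] algebra_simps)
  also have "\<dots> \<le> qnorm m q (matvec m n (fst \<theta> l) (\<lambda>j. y j - y' j)) + (qnorm m q (matvec m n B y') + qnorm m q c)"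
    using qnorm_triangle[OF q] by (meson add_left_mono order_trans)
  also have "\<dots> \<le> r * qnorm n q (\<lambda>j. y j - y' j) + (real W * \<delta> * qnorm n q y' + real W * \<delta>)"
  proof (intro add_mono)
    show "qnorm m q (matvec m n (fst \<theta> l) (\<lambda>j. y j - y' j)) \<le> r * qnorm n q (\<lambda>j. y j - y' j)"
      using \<theta> l unfolding m_def n_def by (intro qnorm_matvec_le_opnorm[OF q _ r]) (auto simp: param_ball_def)
    have "qnorm m q (matvec m n B y') \<le> real m powr inv_exp q * real n powr (1 - inv_exp q) * \<delta> * qnorm n q y'"
      by (rule qnorm_matvec_le_entrywise[OF q d]) (use dW in \<open>auto simp: B_def m_def n_def\<close>)
    also have "\<dots> \<le> real W * \<delta> * qnorm n q y'"
      using powr_mult_powr_le[of m W n "inv_exp q"] W e d unfolding m_def n_def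
      by (intro mult_right_mono qnorm_nonneg) auto
    finally show "qnorm m q (matvec m n B y') \<le> real W * \<delta> * qnorm n q y'" .
    have "qnorm m q c \<le> real m powr inv_exp q * \<delta>"
      by (rule qnorm_le_entry_bound[OF q d]) (use db in \<open>auto simp: c_def m_def\<close>)
    also have "\<dots> \<le> real W * \<delta>"
      using powr_inv_exp_le_self[OF q, of m] W d unfolding m_def by (intro mult_right_mono) auto
    finally show "qnorm m q c \<le> real W * \<delta>" .
  qed
  finally show ?thesis by (simp add: m_def n_def algebra_simps)
qed

section \<open>Perturbation of the realization\<close>

lemma N_le_width: "l \<le> L \<Longrightarrow> N l \<le> width L N"
  unfolding width_def by (rule Max_ge) auto

lemma finite_param_entries:
  fixes L :: nat and N :: "nat \<Rightarrow> nat"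
  shows "finite {f l i j | l i j. 1 \<le> l \<and> l \<le> L \<and> i < N l \<and> j < N (l - 1)}"
    and "finite {g l i | l i. 1 \<le> l \<and> l \<le> L \<and> i < N l}"
proof -
  have "{f l i j | l i j. 1 \<le> l \<and> l \<le> L \<and> i < N l \<and> j < N (l - 1)}
        \<subseteq> (\<lambda>(l, i, j). f l i j) ` (SIGMA l:{..L}. SIGMA i:{..<N l}. {..<N (l - 1)})"
    by (auto intro!: rev_image_eqI)
  then show "finite {f l i j | l i j. 1 \<le> l \<and> l \<le> L \<and> i < N l \<and> j < N (l - 1)}"
    by (rule finite_subset) auto
  have "{g l i | l i. 1 \<le> l \<and> l \<le> L \<and> i < N l} \<subseteq> (\<lambda>(l, i). g l i) ` (SIGMA l:{..L}. {..<N l})"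
    by (auto intro!: rev_image_eqI)
  then show "finite {g l i | l i. 1 \<le> l \<and> l \<le> L \<and> i < N l}"
    by (rule finite_subset) auto
qed

lemma weight_diff_le_param_sup:
  "1 \<le> l \<Longrightarrow> l \<le> L \<Longrightarrow> i < N l \<Longrightarrow> j < N (l - 1) \<Longrightarrow>
    \<bar>fst \<theta> l i j - fst \<theta>' l i j\<bar> \<le> param_sup L N (param_diff \<theta> \<theta>')"
  unfolding param_sup_def param_diff_def
  by (rule Max_ge[OF finite_UnI[OF finite_param_entries]]) auto

lemma bias_diff_le_param_sup:
  "1 \<le> l \<Longrightarrow> l \<le> L \<Longrightarrow> i < N l \<Longrightarrow> \<bar>snd \<theta> l i - snd \<theta>' l i\<bar> \<le> param_sup L N (param_diff \<theta> \<theta>')"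
  unfolding param_sup_def param_diff_def
  by (rule Max_ge[OF finite_UnI[OF finite_param_entries]]) auto

lemma param_sup_diff_nonneg: "arch L N din dout \<Longrightarrow> 0 \<le> param_sup L N (param_diff \<theta> \<theta>')"
  using bias_diff_le_param_sup[of 1 L 0 N \<theta> \<theta>'] by (auto simp: arch_def)

lemma param_sup_le:
  assumes arch: "arch L N din dout"
    and W: "\<And>l i j. 1 \<le> l \<Longrightarrow> l \<le> L \<Longrightarrow> i < N l \<Longrightarrow> j < N (l - 1) \<Longrightarrow> \<bar>fst \<theta> l i j\<bar> \<le> c"
    and b: "\<And>l i. 1 \<le> l \<Longrightarrow> l \<le> L \<Longrightarrow> i < N l \<Longrightarrow> \<bar>snd \<theta> l i\<bar> \<le> c"
  shows "param_sup L N \<theta> \<le> c"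
  unfolding param_sup_def
proof (rule Max.boundedI)
  show "finite ({\<bar>fst \<theta> l i j\<bar> | l i j. 1 \<le> l \<and> l \<le> L \<and> i < N l \<and> j < N (l - 1)}
      \<union> {\<bar>snd \<theta> l i\<bar> | l i. 1 \<le> l \<and> l \<le> L \<and> i < N l})"
    by (intro finite_UnI finite_param_entries)
  have "\<bar>snd \<theta> 1 0\<bar> \<in> {\<bar>snd \<theta> l i\<bar> | l i. 1 \<le> l \<and> l \<le> L \<and> i < N l}"
    using arch by (force simp: arch_def)
  then show "{\<bar>fst \<theta> l i j\<bar> | l i j. 1 \<le> l \<and> l \<le> L \<and> i < N l \<and> j < N (l - 1)}
      \<union> {\<bar>snd \<theta> l i\<bar> | l i. 1 \<le> l \<and> l \<le> L \<and> i < N l} \<noteq> {}" by blast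
qed (use W b in auto)

definition lip_factor :: "nat \<Rightarrow> (nat \<Rightarrow> nat) \<Rightarrow> real \<Rightarrow> params \<Rightarrow> params \<Rightarrow> real" where
  "lip_factor L N r \<theta> \<theta>' = real (width L N) * real L ^ 2 * r ^ (L - 1) * param_sup L N (param_diff \<theta> \<theta>')"

lemma lip_factor_nonneg: "arch L N din dout \<Longrightarrow> 1 \<le> r \<Longrightarrow> 0 \<le> lip_factor L N r \<theta> \<theta>'"
  using param_sup_diff_nonneg[of L N din dout \<theta> \<theta>'] by (simp add: lip_factor_def)

context
  fixes L :: nat and N :: "nat \<Rightarrow> nat" and din dout :: nat and q :: ereal and r :: real and x :: vec
    and \<theta> \<theta>' :: params
  assumes arch: "arch L N din dout" and q: "1 \<le> q" and r: "1 \<le> r"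
    and \<theta>: "\<theta> \<in> param_ball q L N r" and \<theta>': "\<theta>' \<in> param_ball q L N r"
begin

lemma qnorm_hidden_le: "l < L \<Longrightarrow> qnorm (N l) q (hidden N \<theta>' x l) \<le> r ^ l * (qnorm din q x + real l)"
proof (induction l)
  case 0
  have "qnorm (N 0) q (hidden N \<theta>' x 0) = qnorm din q x"
    using arch by (auto simp: arch_def intro!: qnorm_cong)
  then show ?case by simp
next
  case (Suc l)
  have "qnorm (N (Suc l)) q (hidden N \<theta>' x (Suc l)) \<le> qnorm (N (Suc l)) q (affine N \<theta>' (Suc l) (hidden N \<theta>' x l))"
    by (simp add: qnorm_mono[OF q])
  also have "\<dots> \<le> r * qnorm (N l) q (hidden N \<theta>' x l) + r"
    using qnorm_affine_le[OF q \<theta>', of "Suc l"] Suc r by simp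
  also have "\<dots> \<le> r * (r ^ l * (qnorm din q x + real l)) + r ^ Suc l"
    using Suc r by (intro add_mono mult_left_mono) (auto intro: order_trans[OF _ power_increasing[of 1 "Suc l" r]])
  also have "\<dots> = r ^ Suc l * (qnorm din q x + real (Suc l))" by (simp add: algebra_simps)
  finally show ?case .
qed

abbreviation width_sup_diff :: real where "width_sup_diff \<equiv> real (width L N) * param_sup L N (param_diff \<theta> \<theta>')"

lemma width_sup_diff_nonneg: "0 \<le> width_sup_diff"
  using param_sup_diff_nonneg[OF arch] by simp

lemma qnorm_layer_diff_le:
  assumes l: "1 \<le> l" "l \<le> L"
  shows "qnorm (N l) q (\<lambda>i. affine N \<theta> l (hidden N \<theta> x (l - 1)) i - affine N \<theta>' l (hidden N \<theta>' x (l - 1)) i)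
    \<le> r * qnorm (N (l - 1)) q (\<lambda>i. hidden N \<theta> x (l - 1) i - hidden N \<theta>' x (l - 1) i)
       + width_sup_diff * (r ^ (l - 1) * (qnorm din q x + real (l - 1)) + 1)"
proof -
  have widths: "1 \<le> N l" "N l \<le> width L N" "1 \<le> N (l - 1)" "N (l - 1) \<le> width L N"
    using l arch by (auto intro: N_le_width simp: arch_def)
  have "qnorm (N l) q (\<lambda>i. affine N \<theta> l (hidden N \<theta> x (l - 1)) i - affine N \<theta>' l (hidden N \<theta>' x (l - 1)) i)
    \<le> r * qnorm (N (l - 1)) q (\<lambda>i. hidden N \<theta> x (l - 1) i - hidden N \<theta>' x (l - 1) i)
       + width_sup_diff * (qnorm (N (l - 1)) q (hidden N \<theta>' x (l - 1)) + 1)"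
    using r by (intro qnorm_affine_diff_le[OF q \<theta> l _ param_sup_diff_nonneg[OF arch] _ _ widths]
        weight_diff_le_param_sup[OF l] bias_diff_le_param_sup[OF l]) (auto simp: mult.assoc)
  also have "\<dots> \<le> r * qnorm (N (l - 1)) q (\<lambda>i. hidden N \<theta> x (l - 1) i - hidden N \<theta>' x (l - 1) i)
       + width_sup_diff * (r ^ (l - 1) * (qnorm din q x + real (l - 1)) + 1)"
    using qnorm_hidden_le[of "l - 1"] l width_sup_diff_nonneg by (intro add_left_mono mult_left_mono) auto
  finally show ?thesis .
qed

lemma qnorm_hidden_diff_le:
  "l < L \<Longrightarrow> r * qnorm (N l) q (\<lambda>i. hidden N \<theta> x l i - hidden N \<theta>' x l i)
     \<le> width_sup_diff * real l * r ^ l * (qnorm din q x + real l)"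
proof (induction l)
  case 0
  have "qnorm (N 0) q (\<lambda>i. hidden N \<theta> x 0 i - hidden N \<theta>' x 0 i) = 0"
    using q by (intro qnorm_eq_0) auto
  then show ?case by simp
next
  case (Suc l)
  define E A X where "E = qnorm (N l) q (\<lambda>i. hidden N \<theta> x l i - hidden N \<theta>' x l i)"
    and "A = r ^ l" and "X = qnorm din q x + real l"
  have A: "1 \<le> A" using r by (simp add: A_def one_le_power)
  have X: "0 \<le> X" by (simp add: X_def qnorm_nonneg)
  have IH: "r * E \<le> width_sup_diff * real l * A * X" using Suc by (simp add: E_def A_def X_def)
  have "qnorm (N (Suc l)) q (\<lambda>i. hidden N \<theta> x (Suc l) i - hidden N \<theta>' x (Suc l) i)
      \<le> qnorm (N (Suc l)) q (\<lambda>i. affine N \<theta> (Suc l) (hidden N \<theta> x l) i - affine N \<theta>' (Suc l) (hidden N \<theta>' x l) i)"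
    by (intro qnorm_mono[OF q]) auto
  also have "\<dots> \<le> r * E + width_sup_diff * (A * X + 1)"
    using qnorm_layer_diff_le[of "Suc l"] Suc.prems by (simp add: E_def A_def X_def)
  finally have "r * qnorm (N (Suc l)) q (\<lambda>i. hidden N \<theta> x (Suc l) i - hidden N \<theta>' x (Suc l) i)
      \<le> r * (r * E + width_sup_diff * (A * X + 1))"
    by (rule mult_left_mono) (use r in auto)
  also have "\<dots> = r * (r * E) + r * width_sup_diff * (A * X + 1)"
    by (simp add: algebra_simps)
  also have "\<dots> \<le> r * (width_sup_diff * real l * A * X) + r * width_sup_diff * (A * X + A * (real l + 1))"
    using IH r width_sup_diff_nonneg A by (intro add_mono mult_left_mono) (auto intro: order_trans[OF A])
  also have "\<dots> = width_sup_diff * real (Suc l) * (r * A) * (X + 1)" by (simp add: algebra_simps)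
  finally show ?case by (simp add: A_def X_def algebra_simps)
qed

lemma qnorm_realize_diff_le:
  "qnorm dout q (realize L N \<theta> x - realize L N \<theta>' x) \<le> lip_factor L N r \<theta> \<theta>' * (qnorm din q x + 1)"
proof -
  obtain m where Lm: "L = Suc m" using arch by (cases L) (auto simp: arch_def)
  define E A nx where "E = qnorm (N m) q (\<lambda>i. hidden N \<theta> x m i - hidden N \<theta>' x m i)"
    and "A = r ^ m" and "nx = qnorm din q x"
  have A: "1 \<le> A" using r by (simp add: A_def one_le_power)
  have nx: "0 \<le> nx" by (simp add: nx_def qnorm_nonneg)
  have "qnorm dout q (realize L N \<theta> x - realize L N \<theta>' x)
      = qnorm (N L) q (\<lambda>i. affine N \<theta> L (hidden N \<theta> x m) i - affine N \<theta>' L (hidden N \<theta>' x m) i)"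
    using arch Lm by (simp add: arch_def realize_def fun_diff_def)
  also have "\<dots> \<le> r * E + width_sup_diff * (A * (nx + real m) + 1)"
    using qnorm_layer_diff_le[of L] Lm arch by (simp add: arch_def E_def A_def nx_def)
  also have "\<dots> \<le> width_sup_diff * real m * A * (nx + real m) + width_sup_diff * (A * (nx + real m) + A * (real m + 1))"
  proof (rule add_mono)
    show "r * E \<le> width_sup_diff * real m * A * (nx + real m)"
      using qnorm_hidden_diff_le[of m] Lm by (simp add: E_def A_def nx_def)
    show "width_sup_diff * (A * (nx + real m) + 1) \<le> width_sup_diff * (A * (nx + real m) + A * (real m + 1))"
      using width_sup_diff_nonneg A by (intro mult_left_mono add_left_mono) (auto intro: order_trans[OF A])
  qed
  also have "\<dots> = width_sup_diff * A * ((real m + 1) * nx + (real m + 1) ^ 2)"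
    by (simp add: power2_eq_square algebra_simps)
  also have "\<dots> \<le> width_sup_diff * A * ((real m + 1) ^ 2 * nx + (real m + 1) ^ 2)"
    using width_sup_diff_nonneg A nx by (intro mult_left_mono add_right_mono mult_right_mono) (auto simp: power2_eq_square)
  also have "\<dots> = lip_factor L N r \<theta> \<theta>' * (nx + 1)"
    by (simp add: lip_factor_def A_def Lm algebra_simps)
  finally show ?thesis by (simp add: nx_def)
qed

end

section \<open>Measurability\<close>

lemma measurable_coordinate:
  assumes M: "admissible_measure din M" and i: "i < din"
  shows "(\<lambda>x. x i) \<in> borel_measurable M"
proof -
  let ?P = "PiM {..<din} (\<lambda>_. borel :: real measure)"
  have "(\<lambda>x. x i) \<in> borel_measurable (restrict_space ?P (space M))"
    by (rule measurable_restrict_space1) (use i in simp)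
  moreover have "measurable (restrict_space ?P (space M)) (borel :: real measure) \<subseteq> measurable M borel"
    using M unfolding admissible_measure_def
    by (intro measurable_mono) (auto simp: space_restrict_space)
  ultimately show ?thesis by blast
qed

lemma measurable_hidden:
  assumes M: "admissible_measure din M" and N0: "N 0 = din"
  shows "(\<lambda>x. hidden N \<theta> x l i) \<in> borel_measurable M"
proof (induction l arbitrary: i)
  case 0
  show ?case using measurable_coordinate[OF M, of i] N0 by (cases "i < din") auto
next
  case (Suc l)
  note Suc[measurable]
  show ?case unfolding hidden.simps affine_def by measurable
qed

lemma measurable_realize_diff:
  assumes M: "admissible_measure din M" and N0: "N 0 = din"
  shows "(\<lambda>x. realize L N \<theta> x i - realize L N \<theta>' x i) \<in> borel_measurable M"
proof -
  note measurable_hidden[where M=M and N=N, OF M N0, measurable]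
  show ?thesis unfolding realize_def affine_def by measurable
qed

lemma continuous_on_l1_Lipschitz:
  fixes F :: "vec \<Rightarrow> real"
  assumes F: "\<And>u v. \<bar>F u - F v\<bar> \<le> C * (\<Sum>i<n. \<bar>u i - v i\<bar>)"
  shows "continuous_on UNIV F"
proof -
  have "isCont F u" for u
  proof -
    have coord: "((\<lambda>v::vec. v i) \<longlongrightarrow> u i) (at u)" for i
      using continuous_on_eq_continuous_at[of UNIV "\<lambda>v::vec. v i"] continuous_on_product_coordinates
      by (simp add: isCont_def)
    have "((\<lambda>v. C * (\<Sum>i<n. \<bar>v i - u i\<bar>)) \<longlongrightarrow> C * (\<Sum>i<n. \<bar>u i - u i\<bar>)) (at u)"
      by (intro tendsto_intros coord)
    then have "((\<lambda>v. C * (\<Sum>i<n. \<bar>v i - u i\<bar>)) \<longlongrightarrow> 0) (at u)" by simp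
    then have "((\<lambda>v. F v - F u) \<longlongrightarrow> 0) (at u)"
      by (rule Lim_null_comparison[rotated]) (use F in auto)
    then show ?thesis unfolding isCont_def by (simp add: LIM_zero_iff)
  qed
  then show ?thesis by (simp add: continuous_on_eq_continuous_at)
qed

lemma measurable_l1_Lipschitz_comp:
  fixes F :: "vec \<Rightarrow> real" and f :: "'a \<Rightarrow> vec"
  assumes F: "\<And>u v. \<bar>F u - F v\<bar> \<le> C * (\<Sum>i<n. \<bar>u i - v i\<bar>)"
    and f: "\<And>i. (\<lambda>x. f x i) \<in> borel_measurable M"
  shows "(\<lambda>x. F (f x)) \<in> borel_measurable M"
  using measurable_coordinatewise_then_product[OF f]
    borel_measurable_continuous_onI[OF continuous_on_l1_Lipschitz[OF F]]
  by (rule measurable_compose)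

lemma measurable_qnorm_infinity:
  assumes M: "admissible_measure din M"
  shows "(\<lambda>x. qnorm din \<infinity> x) \<in> borel_measurable M"
proof -
  have "(\<lambda>x. qnorm din \<infinity> (\<lambda>i. if i < din then x i else 0)) \<in> borel_measurable M"
  proof (rule measurable_l1_Lipschitz_comp[OF qnorm_Lipschitz])
    show "(\<lambda>x. if i < din then x i else 0) \<in> borel_measurable M" for i
      by (cases "i < din") (simp_all add: measurable_coordinate[OF M])
  qed simp
  moreover have "qnorm din \<infinity> (\<lambda>i. if i < din then x i else 0) = qnorm din \<infinity> x" for x
    by (intro qnorm_cong) auto
  ultimately show ?thesis by simp
qed

lemma measurable_qnorm_realize_diff:
  assumes M: "admissible_measure din M" and arch: "arch L N din dout" and q: "1 \<le> q"
  shows "(\<lambda>x. qnorm dout q (realize L N \<theta> x - realize L N \<theta>' x)) \<in> borel_measurable M"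
  by (rule measurable_l1_Lipschitz_comp[OF qnorm_Lipschitz[OF q]])
    (use arch in \<open>simp add: arch_def measurable_realize_diff[OF M]\<close>)

section \<open>Norms on \<open>R^d\<close>\<close>

definition unit_vec :: "nat \<Rightarrow> vec" where "unit_vec i = (\<lambda>j. if j = i then 1 else 0)"

definition basis_norm_sum :: "nat \<Rightarrow> (vec \<Rightarrow> real) \<Rightarrow> real" where
  "basis_norm_sum d nrm = (\<Sum>i<d. nrm (unit_vec i))"

lemma is_norm_on_zero: "is_norm_on d nrm \<Longrightarrow> nrm (\<lambda>_. 0) = 0"
  unfolding is_norm_on_def by auto

lemma is_norm_on_nonneg: "is_norm_on d nrm \<Longrightarrow> (\<forall>i\<ge>d. w i = 0) \<Longrightarrow> 0 \<le> nrm w"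
  unfolding is_norm_on_def by auto

lemma is_norm_on_triangle:
  "is_norm_on d nrm \<Longrightarrow> (\<forall>i\<ge>d. x i = 0) \<Longrightarrow> (\<forall>i\<ge>d. y i = 0) \<Longrightarrow> nrm (\<lambda>i. x i + y i) \<le> nrm x + nrm y"
  unfolding is_norm_on_def by blast

lemma basis_norm_sum_nonneg:
  assumes "is_norm_on d nrm" shows "0 \<le> basis_norm_sum d nrm"
  unfolding basis_norm_sum_def by (auto intro!: sum_nonneg is_norm_on_nonneg[OF assms] simp: unit_vec_def)

lemma is_norm_on_le_sum_basis:
  assumes nrm: "is_norm_on d nrm" and w: "\<forall>i\<ge>d. w i = 0"
  shows "nrm w \<le> (\<Sum>i<d. \<bar>w i\<bar> * nrm (unit_vec i))"
proof -
  have "nrm (\<lambda>j. if j < k then w j else 0) \<le> (\<Sum>i<k. \<bar>w i\<bar> * nrm (unit_vec i))" if "k \<le> d" for k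
    using that
  proof (induction k)
    case 0 then show ?case by (simp add: is_norm_on_zero[OF nrm])
  next
    case (Suc k)
    have split: "(\<lambda>j. if j < Suc k then w j else 0) = (\<lambda>j. (if j < k then w j else 0) + w k * unit_vec k j)"
      by (auto simp: unit_vec_def fun_eq_iff less_Suc_eq)
    have "nrm (\<lambda>j. if j < Suc k then w j else 0) \<le> nrm (\<lambda>j. if j < k then w j else 0) + nrm (\<lambda>j. w k * unit_vec k j)"
      unfolding split using Suc.prems by (intro is_norm_on_triangle[OF nrm]) (auto simp: unit_vec_def)
    also have "nrm (\<lambda>j. w k * unit_vec k j) = \<bar>w k\<bar> * nrm (unit_vec k)"
      using nrm Suc.prems unfolding is_norm_on_def by (auto simp: unit_vec_def)
    finally show ?case using Suc by simp
  qed
  moreover have "(\<lambda>j. if j < d then w j else 0) = w" using w by (auto simp: not_less)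
  ultimately show ?thesis by fastforce
qed

lemma is_norm_on_le_qnorm:
  assumes nrm: "is_norm_on d nrm" and w: "\<forall>i\<ge>d. w i = 0" and q: "1 \<le> q"
  shows "nrm w \<le> basis_norm_sum d nrm * qnorm d q w"
proof -
  have "nrm w \<le> (\<Sum>i<d. \<bar>w i\<bar> * nrm (unit_vec i))" by (rule is_norm_on_le_sum_basis[OF nrm w])
  also have "\<dots> \<le> (\<Sum>i<d. qnorm d q w * nrm (unit_vec i))"
    using nrm by (intro sum_mono mult_right_mono abs_le_qnorm[OF q] is_norm_on_nonneg) (auto simp: unit_vec_def)
  also have "\<dots> = basis_norm_sum d nrm * qnorm d q w"
    by (simp add: basis_norm_sum_def sum_distrib_left mult.commute)
  finally show ?thesis .
qed

lemma is_norm_on_Lipschitz: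
  assumes nrm: "is_norm_on d nrm"
  shows "\<bar>nrm (\<lambda>i. if i < d then u i else 0) - nrm (\<lambda>i. if i < d then v i else 0)\<bar>
          \<le> basis_norm_sum d nrm * (\<Sum>i<d. \<bar>u i - v i\<bar>)"
proof -
  have "nrm (\<lambda>i. if i < d then a i else 0)
      \<le> nrm (\<lambda>i. if i < d then b i else 0) + basis_norm_sum d nrm * (\<Sum>i<d. \<bar>a i - b i\<bar>)" for a b
  proof -
    have "(\<lambda>i. if i < d then a i else 0) = (\<lambda>i. (if i < d then b i else 0) + (if i < d then a i - b i else 0))"
      by auto
    then have "nrm (\<lambda>i. if i < d then a i else 0)
        \<le> nrm (\<lambda>i. if i < d then b i else 0) + nrm (\<lambda>i. if i < d then a i - b i else 0)"
      by (simp add: is_norm_on_triangle[OF nrm])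
    also have "nrm (\<lambda>i. if i < d then a i - b i else 0)
        \<le> basis_norm_sum d nrm * qnorm d 1 (\<lambda>i. if i < d then a i - b i else 0)"
      by (rule is_norm_on_le_qnorm[OF nrm]) auto
    also have "qnorm d 1 (\<lambda>i. if i < d then a i - b i else 0) = (\<Sum>i<d. \<bar>a i - b i\<bar>)"
      by (simp add: qnorm_finite sum_nonneg)
    finally show ?thesis by simp
  qed
  from this[of u v] this[of v u] show ?thesis by (simp add: abs_minus_commute abs_le_iff)
qed

section \<open>Upper bounds in L^p\<close>

lemma lp_norm_finite_le:
  assumes p: "p \<noteq> \<infinity>" and I: "(\<integral>\<^sup>+ x. ennreal (nrm (f x) powr real_of_ereal p) \<partial>M) \<le> ennreal I"
    and I0: "0 \<le> I" and P: "0 < real_of_ereal p"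
  shows "lp_norm M p nrm f \<le> ennreal (I powr (1 / real_of_ereal p))"
proof -
  define J where "J = (\<integral>\<^sup>+ x. ennreal (nrm (f x) powr real_of_ereal p) \<partial>M)"
  have "J \<noteq> \<infinity>" using I by (auto simp: J_def top_unique)
  moreover have "enn2real J powr (1 / real_of_ereal p) \<le> I powr (1 / real_of_ereal p)"
    using enn2real_mono[OF I[folded J_def]] I0 P by (intro powr_mono2) auto
  ultimately show ?thesis using p by (simp add: lp_norm_def J_def[symmetric] ennreal_leI)
qed

lemma lp_norm_infinity_le_Cp:
  fixes M :: "vec measure" and f :: "vec \<Rightarrow> vec"
  assumes Cp: "Cp din M \<infinity> < \<infinity>"
    and le: "\<And>x. x \<in> space M \<Longrightarrow> nrm (f x) \<le> C * (qnorm din \<infinity> x + 1)" and C: "0 \<le> C"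
    and meas: "(\<lambda>x. nrm (f x)) \<in> borel_measurable M"
  shows "lp_norm M \<infinity> nrm f \<le> ennreal (C * (enn2real (Cp din M \<infinity>) + 1))"
proof -
  define C0 where "C0 = enn2real (Cp din M \<infinity>)"
  have "AE x in M. ennreal (qnorm din \<infinity> x) \<le> ennreal C0"
    using esssup_AE[of "\<lambda>x. ennreal (qnorm din \<infinity> x)" M] Cp by (simp add: Cp_def C0_def)
  then have "AE x in M. ennreal (nrm (f x)) \<le> ennreal (C * (C0 + 1))"
  proof (rule AE_mp, intro AE_I2 impI ennreal_leI)
    fix x assume x: "x \<in> space M" and "ennreal (qnorm din \<infinity> x) \<le> ennreal C0"
    then have "qnorm din \<infinity> x \<le> C0" by (simp add: C0_def)
    then show "nrm (f x) \<le> C * (C0 + 1)"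
      using le[OF x] C by (meson add_right_mono mult_left_mono order_trans)
  qed
  then show ?thesis using meas by (simp add: lp_norm_def C0_def esssup_I)
qed

lemma lp_norm_finite_le_Cp:
  fixes M :: "vec measure" and f :: "vec \<Rightarrow> vec"
  assumes M: "admissible_measure din M" and p: "1 \<le> p" and p': "p \<noteq> \<infinity>" and Cp: "Cp din M p < \<infinity>"
    and nrm_nonneg: "\<And>x. x \<in> space M \<Longrightarrow> 0 \<le> nrm (f x)"
    and le: "\<And>x. x \<in> space M \<Longrightarrow> nrm (f x) \<le> C * (qnorm din \<infinity> x + 1)" and C: "0 \<le> C"
  shows "lp_norm M p nrm f \<le> ennreal (C * enn2real (Cp din M p))"
proof -
  define P where "P = real_of_ereal p"
  have P: "1 \<le> P" using one_le_real_of_ereal[OF p p'] by (simp add: P_def)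
  define I0 where "I0 = (\<integral>\<^sup>+ x. ennreal ((qnorm din \<infinity> x + 1) powr P) \<partial>M)"
  have I0: "I0 = ennreal (enn2real I0)"
    using Cp p' by (cases I0) (auto simp: Cp_def I0_def P_def Let_def)
  have Cp_eq: "enn2real (Cp din M p) = enn2real I0 powr (1 / P)"
    using I0 p' by (auto simp: Cp_def I0_def P_def Let_def)
  note measurable_qnorm_infinity[OF M, measurable]
  have "(\<integral>\<^sup>+ x. ennreal (nrm (f x) powr P) \<partial>M)
      \<le> (\<integral>\<^sup>+ x. ennreal (C powr P) * ennreal ((qnorm din \<infinity> x + 1) powr P) \<partial>M)"
  proof (rule nn_integral_mono)
    fix x assume x: "x \<in> space M"
    have "nrm (f x) powr P \<le> C powr P * (qnorm din \<infinity> x + 1) powr P"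
      using nrm_nonneg[OF x] le[OF x] P C by (simp add: powr_mult[symmetric] qnorm_nonneg powr_mono2)
    then show "ennreal (nrm (f x) powr P) \<le> ennreal (C powr P) * ennreal ((qnorm din \<infinity> x + 1) powr P)"
      by (simp add: ennreal_mult'[symmetric] ennreal_leI)
  qed
  also have "\<dots> = ennreal (C powr P * enn2real I0)"
    by (subst nn_integral_cmult) (simp_all add: I0_def[symmetric], subst I0, simp add: ennreal_mult')
  finally have "lp_norm M p nrm f \<le> ennreal ((C powr P * enn2real I0) powr (1 / P))"
    unfolding P_def by (rule lp_norm_finite_le[OF p']) (use C P in \<open>auto simp: P_def\<close>)
  also have "(C powr P * enn2real I0) powr (1 / P) = C * enn2real (Cp din M p)"
    using C P by (simp add: Cp_eq powr_mult powr_powr)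
  finally show ?thesis .
qed

text \<open>The summand \<open>+ 1\<close> is only needed for \<open>p = \<infinity>\<close>, where \<open>Cp\<close> is the essential supremum of
  \<open>\<parallel>x\<parallel>_\<infinity>\<close> rather than of \<open>\<parallel>x\<parallel>_\<infinity> + 1\<close>.\<close>
lemma lp_norm_le_Cp:
  fixes M :: "vec measure" and f :: "vec \<Rightarrow> vec"
  assumes M: "admissible_measure din M" and p: "1 \<le> p" and Cp: "Cp din M p < \<infinity>"
    and nrm_nonneg: "\<And>x. x \<in> space M \<Longrightarrow> 0 \<le> nrm (f x)"
    and le: "\<And>x. x \<in> space M \<Longrightarrow> nrm (f x) \<le> C * (qnorm din \<infinity> x + 1)" and C: "0 \<le> C"
    and meas: "p = \<infinity> \<Longrightarrow> (\<lambda>x. nrm (f x)) \<in> borel_measurable M"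
  shows "lp_norm M p nrm f \<le> ennreal (C * (enn2real (Cp din M p) + 1))"
proof (cases "p = \<infinity>")
  case True
  then show ?thesis using lp_norm_infinity_le_Cp[of din M nrm f C] Cp le C meas by simp
next
  case False
  have "ennreal (C * enn2real (Cp din M p)) \<le> ennreal (C * (enn2real (Cp din M p) + 1))"
    using C by (intro ennreal_leI mult_left_mono) auto
  with lp_norm_finite_le_Cp[where nrm=nrm and f=f, OF M p False Cp nrm_nonneg le C] show ?thesis
    by (rule order_trans)
qed

lemma realize_diff_outside: "arch L N din dout \<Longrightarrow> i \<ge> dout \<Longrightarrow> (realize L N \<theta> x - realize L N \<theta>' x) i = 0"
  by (auto simp: arch_def realize_def affine_def)

lemma lp_norm_realize_diff_le:
  fixes M :: "vec measure"
  assumes M: "admissible_measure din M" and p: "1 \<le> p" and Cp: "Cp din M p < \<infinity>"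
    and nrm: "is_norm_on dout nrm" and q: "1 \<le> q"
    and arch: "arch L N din dout" and r: "1 \<le> r"
    and \<theta>: "\<theta> \<in> param_ball q L N r" and \<theta>': "\<theta>' \<in> param_ball q L N r"
  shows "lp_norm M p nrm (\<lambda>x. realize L N \<theta> x - realize L N \<theta>' x)
    \<le> ennreal ((basis_norm_sum dout nrm + 1) * (real din + 1) * (enn2real (Cp din M p) + 1) * lip_factor L N r \<theta> \<theta>')"
proof -
  define B b where "B = lip_factor L N r \<theta> \<theta>'" and "b = basis_norm_sum dout nrm"
  have B: "0 \<le> B" unfolding B_def by (rule lip_factor_nonneg[OF arch r])
  have b: "0 \<le> b" unfolding b_def by (rule basis_norm_sum_nonneg[OF nrm])
  define f where "f = (\<lambda>x. realize L N \<theta> x - realize L N \<theta>' x)"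
  have f: "\<forall>i\<ge>dout. f x i = 0" for x using realize_diff_outside[OF arch] by (simp add: f_def)
  have "lp_norm M p nrm f \<le> ennreal ((b + 1) * (real din + 1) * B * (enn2real (Cp din M p) + 1))"
  proof (rule lp_norm_le_Cp[OF M p Cp])
    fix x
    show "0 \<le> nrm (f x)" by (rule is_norm_on_nonneg[OF nrm f])
    have "nrm (f x) \<le> b * qnorm dout q (f x)" unfolding b_def by (rule is_norm_on_le_qnorm[OF nrm f q])
    also have "\<dots> \<le> b * (B * (real din * qnorm din \<infinity> x + 1))"
      using qnorm_realize_diff_le[OF arch q r \<theta> \<theta>', of x] qnorm_le_qnorm_infinity[OF q, of din x] b B
      unfolding f_def B_def by (auto intro!: mult_left_mono elim: order_trans)
    also have "\<dots> \<le> (b + 1) * (B * ((real din + 1) * qnorm din \<infinity> x + (real din + 1)))"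
      using b B by (intro mult_mono add_mono mult_right_mono) (auto simp: qnorm_nonneg)
    finally show "nrm (f x) \<le> (b + 1) * (real din + 1) * B * (qnorm din \<infinity> x + 1)"
      by (simp add: algebra_simps)
    show "0 \<le> (b + 1) * (real din + 1) * B" using b B by simp
  next
    have "(\<lambda>x. nrm (\<lambda>i. if i < dout then f x i else 0)) \<in> borel_measurable M"
      by (rule measurable_l1_Lipschitz_comp[OF is_norm_on_Lipschitz[OF nrm]])
        (simp add: f_def measurable_realize_diff[OF M] arch[unfolded arch_def])
    moreover have "(\<lambda>i. if i < dout then f x i else 0) = f x" for x
      using f[of x] by (auto simp: fun_eq_iff)
    ultimately show "(\<lambda>x. nrm (f x)) \<in> borel_measurable M" by simp
  qed
  then show ?thesis by (simp add: f_def B_def b_def mult_ac)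
qed

lemma realize_Lipschitz_Lp:
  fixes M :: "vec measure"
  assumes M: "admissible_measure din M" and p: "1 \<le> p" and Cp: "Cp din M p < \<infinity>"
    and nrm: "is_norm_on dout nrm" and q: "1 \<le> q"
  shows "\<exists>c>0. \<forall>L N. arch L N din dout \<longrightarrow> (\<forall>r\<ge>1. \<forall>\<theta>\<in>param_ball q L N r. \<forall>\<theta>'\<in>param_ball q L N r.
          lp_norm M p nrm (\<lambda>x. realize L N \<theta> x - realize L N \<theta>' x)
            \<le> ennreal (c * real (width L N) * real L ^ 2 * r ^ (L - 1)
                        * param_sup L N (param_diff \<theta> \<theta>')))"
proof (intro exI conjI allI impI ballI)
  show "0 < (basis_norm_sum dout nrm + 1) * (real din + 1) * (enn2real (Cp din M p) + 1)"
    using basis_norm_sum_nonneg[OF nrm] by (intro mult_pos_pos) (auto intro: add_nonneg_pos)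
qed (use lp_norm_realize_diff_le[OF M p Cp nrm q] in \<open>simp add: lip_factor_def mult_ac\<close>)

section \<open>The cube with Lebesgue measure\<close>

lemma space_cube_lebesgue: "space (cube_lebesgue d D) = PiE {..<d} (\<lambda>_. {-D..D})"
  unfolding cube_lebesgue_def by (auto simp: space_restrict_space space_PiM PiE_iff)

lemma admissible_cube_lebesgue: "admissible_measure d (cube_lebesgue d D)"
  unfolding admissible_measure_def
proof
  show "space (cube_lebesgue d D) \<subseteq> space (Pi\<^sub>M {..<d} (\<lambda>_. borel))"
    by (auto simp: space_cube_lebesgue space_PiM PiE_iff)
  have "sets (restrict_space (Pi\<^sub>M {..<d} (\<lambda>_. borel)) (space (cube_lebesgue d D)))
      = sets (restrict_space (Pi\<^sub>M {..<d} (\<lambda>_. lborel)) (PiE {..<d} (\<lambda>_. {-D..D})))"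
    by (rule restrict_space_sets_cong[OF space_cube_lebesgue sets_PiM_cong]) auto
  then show "sets (restrict_space (Pi\<^sub>M {..<d} (\<lambda>_. borel)) (space (cube_lebesgue d D))) \<subseteq> sets (cube_lebesgue d D)"
    by (simp add: cube_lebesgue_def)
qed

lemma abs_le_cube: "x \<in> space (cube_lebesgue d D) \<Longrightarrow> i < d \<Longrightarrow> \<bar>x i\<bar> \<le> D"
  using PiE_mem[of x "{..<d}" "\<lambda>_. {-D..D}" i] by (auto simp: space_cube_lebesgue abs_le_iff)

lemma emeasure_cube_lebesgue:
  assumes D: "0 < D"
  shows "emeasure (cube_lebesgue d D) (space (cube_lebesgue d D)) = ennreal ((2 * D) ^ d)"
proof -
  interpret product_sigma_finite "\<lambda>_::nat. lborel"
    by (simp add: product_sigma_finite_def lborel.sigma_finite_measure_axioms)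
  have S: "PiE {..<d} (\<lambda>_. {-D..D}) \<in> sets (Pi\<^sub>M {..<d} (\<lambda>_. lborel))"
    by (intro sets_PiM_I_finite) auto
  have "emeasure (cube_lebesgue d D) (space (cube_lebesgue d D))
      = emeasure (Pi\<^sub>M {..<d} (\<lambda>_. lborel)) (PiE {..<d} (\<lambda>_. {-D..D}))"
    unfolding space_cube_lebesgue unfolding cube_lebesgue_def
    by (rule emeasure_restrict_space) (use S sets.sets_into_space[OF S] in \<open>auto simp: Int_absorb2\<close>)
  also have "\<dots> = (\<Prod>i<d. emeasure lborel {-D..D})" by (rule emeasure_PiM) auto
  also have "\<dots> = ennreal ((2 * D) ^ d)" using D by (simp add: ennreal_power)
  finally show ?thesis .
qed

lemma lp_norm_cube_le:
  assumes D: "0 < D" and p: "1 \<le> p" and C: "0 \<le> C"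
    and bound: "\<And>x. x \<in> space (cube_lebesgue d D) \<Longrightarrow> 0 \<le> nrm (f x) \<and> nrm (f x) \<le> C"
    and meas: "(\<lambda>x. nrm (f x)) \<in> borel_measurable (cube_lebesgue d D)"
  shows "lp_norm (cube_lebesgue d D) p nrm f \<le> ennreal (C * (2 * D) powr (real d * inv_exp p))"
proof (cases "p = \<infinity>")
  case True
  have "esssup (cube_lebesgue d D) (\<lambda>x. ennreal (nrm (f x))) \<le> ennreal C"
    using meas bound by (intro esssup_I AE_I2 ennreal_leI) auto
  then show ?thesis using True D by (simp add: lp_norm_def inv_exp_def)
next
  case False
  define P where "P = real_of_ereal p"
  have P: "1 \<le> P" using one_le_real_of_ereal[OF p False] by (simp add: P_def)
  have "(\<integral>\<^sup>+ x. ennreal (nrm (f x) powr P) \<partial>cube_lebesgue d D) \<le> (\<integral>\<^sup>+ x. ennreal (C powr P) \<partial>cube_lebesgue d D)"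
    using bound P by (intro nn_integral_mono ennreal_leI powr_mono2) auto
  also have "\<dots> = ennreal (C powr P * (2 * D) ^ d)"
    using D by (simp add: emeasure_cube_lebesgue ennreal_mult')
  finally have "lp_norm (cube_lebesgue d D) p nrm f \<le> ennreal ((C powr P * (2 * D) ^ d) powr (1 / P))"
    unfolding P_def by (rule lp_norm_finite_le[OF False]) (use C D P in \<open>auto simp: P_def\<close>)
  also have "(C powr P * (2 * D) ^ d) powr (1 / P) = C * (2 * D) powr (real d * inv_exp p)"
    using C P D False by (simp add: powr_mult powr_powr powr_realpow[symmetric] inv_exp_def P_def mult_ac)
  finally show ?thesis .
qed

lemma realize_Lipschitz_cube_esssup:
  assumes q: "1 \<le> q" and D: "0 < D" and p: "p = \<infinity>" and arch: "arch L N din dout" and r: "1 \<le> r"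
    and \<theta>: "\<theta> \<in> param_ball q L N r" and \<theta>': "\<theta>' \<in> param_ball q L N r"
  shows "lp_norm (cube_lebesgue din D) p (qnorm dout q) (\<lambda>x. realize L N \<theta> x - realize L N \<theta>' x)
    \<le> ennreal ((D * real din powr inv_exp q + 1) * real (width L N) * real L ^ 2 * r ^ (L - 1)
                * param_sup L N (param_diff \<theta> \<theta>'))"
proof -
  define B where "B = lip_factor L N r \<theta> \<theta>'"
  have B: "0 \<le> B" unfolding B_def by (rule lip_factor_nonneg[OF arch r])
  have "lp_norm (cube_lebesgue din D) p (qnorm dout q) (\<lambda>x. realize L N \<theta> x - realize L N \<theta>' x)
      \<le> ennreal (B * (D * real din powr inv_exp q + 1) * (2 * D) powr (real din * inv_exp p))"
  proof (rule lp_norm_cube_le[OF D])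
    fix x assume x: "x \<in> space (cube_lebesgue din D)"
    have "qnorm din q x \<le> real din powr inv_exp q * D"
      using abs_le_cube[OF x] D by (intro qnorm_le_entry_bound[OF q]) auto
    then have "B * (qnorm din q x + 1) \<le> B * (D * real din powr inv_exp q + 1)"
      using B by (intro mult_left_mono) (auto simp: mult.commute)
    then show "0 \<le> qnorm dout q (realize L N \<theta> x - realize L N \<theta>' x)
        \<and> qnorm dout q (realize L N \<theta> x - realize L N \<theta>' x) \<le> B * (D * real din powr inv_exp q + 1)"
      using qnorm_realize_diff_le[OF arch q r \<theta> \<theta>', of x] by (simp add: qnorm_nonneg B_def)
  qed (use p B D measurable_qnorm_realize_diff[OF admissible_cube_lebesgue arch q] in auto)
  moreover have "(2 * D) powr (real din * inv_exp p) = 1" using p D by (simp add: inv_exp_def)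
  ultimately show ?thesis by (simp add: B_def lip_factor_def mult_ac)
qed

lemma realize_Lipschitz_cube_sup_norm:
  assumes p: "1 \<le> p" and D: "0 < D" and q: "q = \<infinity>" and arch: "arch L N din dout" and r: "1 \<le> r"
    and \<theta>: "\<theta> \<in> param_ball q L N r" and \<theta>': "\<theta>' \<in> param_ball q L N r"
  shows "lp_norm (cube_lebesgue din D) p (qnorm dout \<infinity>) (\<lambda>x. realize L N \<theta> x - realize L N \<theta>' x)
    \<le> ennreal ((D + 1) * (2 * D) powr (real din * inv_exp p) * real (width L N) * real L ^ 2
                * r ^ (L - 1) * param_sup L N (param_diff \<theta> \<theta>'))"
proof -
  define B where "B = lip_factor L N r \<theta> \<theta>'"
  have B: "0 \<le> B" unfolding B_def by (rule lip_factor_nonneg[OF arch r])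
  have "lp_norm (cube_lebesgue din D) p (qnorm dout \<infinity>) (\<lambda>x. realize L N \<theta> x - realize L N \<theta>' x)
      \<le> ennreal (B * (D + 1) * (2 * D) powr (real din * inv_exp p))"
  proof (rule lp_norm_cube_le[OF D p])
    fix x assume x: "x \<in> space (cube_lebesgue din D)"
    have "qnorm din \<infinity> x \<le> D"
      using abs_le_cube[OF x] D qnorm_le_entry_bound[of \<infinity> D din x] by (auto simp: inv_exp_def split: if_splits)
    then have "B * (qnorm din \<infinity> x + 1) \<le> B * (D + 1)"
      using B by (intro mult_left_mono) auto
    then show "0 \<le> qnorm dout \<infinity> (realize L N \<theta> x - realize L N \<theta>' x)
        \<and> qnorm dout \<infinity> (realize L N \<theta> x - realize L N \<theta>' x) \<le> B * (D + 1)"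
      using qnorm_realize_diff_le[OF arch _ r \<theta> \<theta>', of x] q by (simp add: qnorm_nonneg B_def)
  qed (use B D measurable_qnorm_realize_diff[OF admissible_cube_lebesgue arch, of \<infinity>] in auto)
  then show ?thesis by (simp add: B_def lip_factor_def mult_ac)
qed

section \<open>Lower bound\<close>

lemma power_diff_ge:
  assumes "0 \<le> s" "s \<le> (r::real)"
  shows "real n * s ^ (n - 1) * (r - s) \<le> r ^ n - s ^ n"
proof -
  have "(\<Sum>i<n. s ^ (n - 1)) \<le> (\<Sum>i<n. s ^ (n - Suc i) * r ^ i)"
  proof (rule sum_mono)
    fix i assume i: "i \<in> {..<n}"
    have "s ^ (n - 1) = s ^ (n - Suc i) * s ^ i" using i by (simp add: power_add[symmetric])
    also have "\<dots> \<le> s ^ (n - Suc i) * r ^ i" using assms by (intro mult_left_mono power_mono) auto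
    finally show "s ^ (n - 1) \<le> s ^ (n - Suc i) * r ^ i" .
  qed
  then have "(r - s) * (\<Sum>i<n. s ^ (n - 1)) \<le> (r - s) * (\<Sum>i<n. s ^ (n - Suc i) * r ^ i)"
    using assms by (intro mult_left_mono) auto
  then show ?thesis by (simp add: power_diff_sumr2 mult_ac)
qed

text \<open>With \<open>\<delta> = r / (2 L)\<close>, Bernoulli's inequality gives \<open>(r - \<delta>) ^ (L - 1) \<ge> r ^ (L - 1) / 2\<close>.\<close>
lemma power_diff_ge_half:
  assumes r: "0 \<le> r" and L: "1 \<le> L"
  shows "real L * r ^ (L - 1) * (r / (2 * real L)) / 2 \<le> r ^ L - (r - r / (2 * real L)) ^ L"
proof -
  define \<delta> c where "\<delta> = r / (2 * real L)" and "c = 1 - 1 / (2 * real L)"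
  have "r * 1 \<le> r * (2 * real L)" using r L by (intro mult_left_mono) auto
  then have \<delta>: "0 \<le> \<delta>" "\<delta> \<le> r" using r L by (auto simp: \<delta>_def field_simps)
  have "1 / 2 \<le> 1 + real (L - 1) * (- (1 / (2 * real L)))"
    using L by (simp add: of_nat_diff field_simps)
  also have "\<dots> \<le> c ^ (L - 1)"
    using Bernoulli_inequality[of "- (1 / (2 * real L))" "L - 1"] L by (simp add: c_def)
  finally have "r ^ (L - 1) * (1 / 2) \<le> r ^ (L - 1) * c ^ (L - 1)"
    using r by (intro mult_left_mono) auto
  also have "r ^ (L - 1) * c ^ (L - 1) = (r - \<delta>) ^ (L - 1)"
    by (simp add: \<delta>_def c_def power_mult_distrib[symmetric] right_diff_distrib)
  finally have half: "r ^ (L - 1) / 2 \<le> (r - \<delta>) ^ (L - 1)" by simp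
  have "real L * r ^ (L - 1) * \<delta> / 2 = real L * (r ^ (L - 1) / 2) * (r - (r - \<delta>))" by simp
  also have "\<dots> \<le> real L * (r - \<delta>) ^ (L - 1) * (r - (r - \<delta>))"
    using half \<delta> by (intro mult_right_mono mult_left_mono) auto
  also have "\<dots> \<le> r ^ L - (r - \<delta>) ^ L" by (rule power_diff_ge) (use \<delta> in auto)
  finally show ?thesis by (simp add: \<delta>_def)
qed

definition first_path :: "nat \<Rightarrow> real \<Rightarrow> params" where
  "first_path L a = ((\<lambda>l i j. if 1 \<le> l \<and> l \<le> L \<and> i = 0 \<and> j = 0 then a else 0), (\<lambda>l i. 0))"

lemma arch_width_pos: "arch L N din dout \<Longrightarrow> l \<le> L \<Longrightarrow> 1 \<le> N l"
  by (auto simp: arch_def)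

lemma matvec_first_entry:
  assumes "1 \<le> n"
  shows "matvec m n (\<lambda>i j. if i = 0 \<and> j = 0 then a else 0) x = (\<lambda>i. if i = 0 \<and> 0 < m then a * x 0 else 0)"
  using assms by (auto simp: matvec_def fun_eq_iff if_distrib[of "\<lambda>t. t * _"] sum.delta cong: if_cong)

lemma opnorm_first_entry_le:
  assumes q: "1 \<le> q" and m: "1 \<le> m" and n: "1 \<le> n" and a: "0 \<le> a" "a \<le> r"
  shows "opnorm q m n (\<lambda>i j. if i = 0 \<and> j = 0 then a else 0) \<le> r"
  unfolding opnorm_def
proof (rule cSup_least)
  show "{qnorm m q (matvec m n (\<lambda>i j. if i = 0 \<and> j = 0 then a else 0) x) / qnorm n q x |x.
          (\<forall>i\<ge>n. x i = 0) \<and> x \<noteq> (\<lambda>_. 0)} \<noteq> {}"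
    using n by (auto intro!: exI[of _ "unit_vec 0"] simp: unit_vec_def fun_eq_iff)
next
  fix t assume "t \<in> {qnorm m q (matvec m n (\<lambda>i j. if i = 0 \<and> j = 0 then a else 0) x) / qnorm n q x |x.
          (\<forall>i\<ge>n. x i = 0) \<and> x \<noteq> (\<lambda>_. 0)}"
  then obtain x where t: "t = qnorm m q (matvec m n (\<lambda>i j. if i = 0 \<and> j = 0 then a else 0) x) / qnorm n q x"
    and x: "\<forall>i\<ge>n. x i = 0" "x \<noteq> (\<lambda>_. 0)" by auto
  obtain i where "x i \<noteq> 0" using x(2) by auto
  moreover from this have "i < n" using x(1) by (meson not_less)
  ultimately have x_pos: "0 < qnorm n q x" using qnorm_pos[OF q] by blast
  have "qnorm m q (matvec m n (\<lambda>i j. if i = 0 \<and> j = 0 then a else 0) x) = qnorm m q (\<lambda>i. if i = 0 then a * x 0 else 0)"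
    unfolding matvec_first_entry[OF n] using m by (intro qnorm_cong) auto
  also have "\<dots> = a * \<bar>x 0\<bar>" using qnorm_first_coordinate[OF q m] a by (simp add: abs_mult)
  also have "\<dots> \<le> r * qnorm n q x" using a n by (intro mult_mono abs_le_qnorm[OF q]) auto
  finally show "t \<le> r" using t x_pos by (simp add: divide_le_eq)
qed

lemma first_path_in_param_ball:
  assumes arch: "arch L N din dout" and q: "1 \<le> q" and a: "0 \<le> a" "a \<le> r"
  shows "first_path L a \<in> param_ball q L N r"
  unfolding param_ball_def
proof (intro CollectI conjI allI impI)
  show "first_path L a \<in> param_space L N"
    using arch_width_pos[OF arch] unfolding param_space_def first_path_def by (auto simp: Suc_le_eq)
  fix l assume l: "1 \<le> l \<and> l \<le> L"
  have "fst (first_path L a) l = (\<lambda>i j. if i = 0 \<and> j = 0 then a else 0)"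
    using l by (auto simp: first_path_def fun_eq_iff)
  then show "opnorm q (N l) (N (l - 1)) (fst (first_path L a) l) \<le> r"
    using opnorm_first_entry_le[OF q arch_width_pos[OF arch] arch_width_pos[OF arch] a, of l "l - 1"] l
    by (simp add: le_diff_conv)
  have "qnorm (N l) q (snd (first_path L a) l) = 0" using q by (intro qnorm_eq_0) (auto simp: first_path_def)
  then show "qnorm (N l) q (snd (first_path L a) l) \<le> r" using a by simp
qed

lemma hidden_first_path:
  assumes arch: "arch L N din dout" and a: "0 \<le> a" and x: "0 \<le> x 0"
  shows "l < L \<Longrightarrow> hidden N (first_path L a) x l 0 = a ^ l * x 0"
proof (induction l)
  case 0 then show ?case using arch_width_pos[OF arch, of 0] by simp
next
  case (Suc l)
  have "affine N (first_path L a) (Suc l) (hidden N (first_path L a) x l) 0 = a * hidden N (first_path L a) x l 0"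
    using arch_width_pos[OF arch, of "Suc l"] arch_width_pos[OF arch, of l] Suc.prems
    by (simp add: affine_def first_path_def if_distrib[of "\<lambda>t. t * _"] sum.delta cong: if_cong)
  then show ?case using Suc a x by simp
qed

lemma realize_first_path:
  assumes arch: "arch L N din dout" and a: "0 \<le> a" and x: "0 \<le> x 0"
  shows "realize L N (first_path L a) x = (\<lambda>i. if i = 0 then a ^ L * x 0 else 0)"
proof -
  have L: "1 \<le> L" using arch by (simp add: arch_def)
  have "hidden N (first_path L a) x (L - 1) 0 = a ^ (L - 1) * x 0"
    using hidden_first_path[where x=x and N=N and L=L, OF arch a x, of "L - 1"] L by simp
  moreover have "a * a ^ (L - 1) = a ^ L" using L by (simp add: power_eq_if)
  ultimately show ?thesis
    using arch_width_pos[OF arch, of L] arch_width_pos[OF arch, of "L - 1"] L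
    by (auto simp: realize_def affine_def first_path_def fun_eq_iff if_distrib[of "\<lambda>t. t * _"] sum.delta cong: if_cong)
qed

lemma param_sup_first_path_diff:
  assumes arch: "arch L N din dout" and s: "s \<le> r"
  shows "param_sup L N (param_diff (first_path L r) (first_path L s)) = r - s"
proof (rule antisym)
  have L: "1 \<le> L" using arch by (simp add: arch_def)
  show "r - s \<le> param_sup L N (param_diff (first_path L r) (first_path L s))"
    using weight_diff_le_param_sup[of 1 L 0 N 0 "first_path L r" "first_path L s"] L s
      arch_width_pos[OF arch, of 1] arch_width_pos[OF arch, of 0]
    by (simp add: first_path_def)
  show "param_sup L N (param_diff (first_path L r) (first_path L s)) \<le> r - s"
    by (rule param_sup_le[OF arch]) (use s in \<open>auto simp: param_diff_def first_path_def\<close>)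
qed

context
  fixes M :: "vec measure" and din :: nat and p :: ereal
  assumes M: "admissible_measure din M" and din: "0 < din" and p: "1 \<le> p"
begin

lemma not_AE_first_coordinate_zero:
  assumes "0 < emeasure M {x \<in> space M. x 0 \<noteq> 0}"
  shows "\<not> (AE x in M. x 0 = 0)"
proof -
  note measurable_coordinate[OF M din, measurable]
  have "{x \<in> space M. x 0 \<noteq> 0} \<in> sets M" by measurable
  then show ?thesis using AE_iff_measurable[of _ M "\<lambda>x. x 0 = 0"] assms by auto
qed

lemma lp_norm_first_coordinate_finite:
  assumes Cp: "Cp din M p < \<infinity>"
  shows "lp_norm M p (\<lambda>v. \<bar>v 0\<bar>) (\<lambda>x. x) < \<infinity>"
proof -
  have "lp_norm M p (\<lambda>v. \<bar>v 0\<bar>) (\<lambda>x. x) \<le> ennreal (1 * (enn2real (Cp din M p) + 1))"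
    using abs_le_qnorm[of \<infinity> 0 din] din measurable_coordinate[OF M din]
    by (intro lp_norm_le_Cp[OF M p Cp]) (auto simp: qnorm_nonneg add_increasing2)
  then show ?thesis using le_less_trans by fastforce
qed

lemma lp_norm_first_coordinate_pos:
  assumes nonzero: "0 < emeasure M {x \<in> space M. x 0 \<noteq> 0}"
  shows "0 < lp_norm M p (\<lambda>v. \<bar>v 0\<bar>) (\<lambda>x. x)"
proof (rule ccontr)
  assume "\<not> 0 < lp_norm M p (\<lambda>v. \<bar>v 0\<bar>) (\<lambda>x. x)"
  then have zero: "lp_norm M p (\<lambda>v. \<bar>v 0\<bar>) (\<lambda>x. x) = 0" by (simp add: not_less)
  note measurable_coordinate[OF M din, measurable]
  have "AE x in M. x 0 = 0"
  proof (cases "p = \<infinity>")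
    case True
    then have "AE x in M. ennreal \<bar>x 0\<bar> \<le> 0"
      using esssup_AE[of "\<lambda>x. ennreal \<bar>x 0\<bar>" M] zero by (simp add: lp_norm_def)
    then show ?thesis by (rule AE_mp) (auto intro!: AE_I2)
  next
    case False
    define P where "P = real_of_ereal p"
    have P: "1 \<le> P" using one_le_real_of_ereal[OF p False] by (simp add: P_def)
    define I where "I = (\<integral>\<^sup>+ x. ennreal (\<bar>x 0\<bar> powr P) \<partial>M)"
    have "I \<noteq> \<infinity>" "enn2real I powr (1 / P) = 0"
      using zero False by (auto simp: lp_norm_def I_def P_def Let_def split: if_splits)
    then have "I = 0" using P by (cases I) auto
    then have "AE x in M. ennreal (\<bar>x 0\<bar> powr P) = 0"
      unfolding I_def by (subst (asm) nn_integral_0_iff_AE) measurable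
    then show ?thesis by (rule AE_mp) (auto intro!: AE_I2)
  qed
  then show False using not_AE_first_coordinate_zero[OF nonzero] by simp
qed

lemma lp_norm_infinity_ge_scaled_first_coordinate:
  assumes a: "0 < a" and f: "\<forall>x\<in>space M. nrm (f x) = a * \<bar>x 0\<bar>"
  shows "ennreal a * lp_norm M \<infinity> (\<lambda>v. \<bar>v 0\<bar>) (\<lambda>x. x) \<le> lp_norm M \<infinity> nrm f"
proof -
  note measurable_coordinate[OF M din, measurable]
  define E where "E = esssup M (\<lambda>x. ennreal (nrm (f x)))"
  have "AE x in M. ennreal \<bar>x 0\<bar> \<le> ennreal (1 / a) * E"
    using esssup_AE[of "\<lambda>x. ennreal (nrm (f x))" M]
  proof (rule AE_mp, intro AE_I2 impI)
    fix x assume x: "x \<in> space M" and le: "ennreal (nrm (f x)) \<le> esssup M (\<lambda>x. ennreal (nrm (f x)))"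
    have "ennreal \<bar>x 0\<bar> = ennreal (1 / a) * ennreal (nrm (f x))"
      using f x a by (simp add: ennreal_mult'[symmetric])
    also have "\<dots> \<le> ennreal (1 / a) * E" using le by (simp add: E_def mult_left_mono)
    finally show "ennreal \<bar>x 0\<bar> \<le> ennreal (1 / a) * E" .
  qed
  then have "esssup M (\<lambda>x. ennreal \<bar>x 0\<bar>) \<le> ennreal (1 / a) * E" by (intro esssup_I) measurable
  then have "ennreal a * esssup M (\<lambda>x. ennreal \<bar>x 0\<bar>) \<le> ennreal a * (ennreal (1 / a) * E)"
    by (rule mult_left_mono) simp
  also have "\<dots> = E" using a by (simp add: ennreal_mult'[symmetric] mult.assoc[symmetric])
  finally show ?thesis by (simp add: lp_norm_def E_def)
qed

lemma lp_norm_finite_ge_scaled_first_coordinate: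
  assumes p': "p \<noteq> \<infinity>" and a: "0 < a" and f: "\<forall>x\<in>space M. nrm (f x) = a * \<bar>x 0\<bar>"
  shows "ennreal a * lp_norm M p (\<lambda>v. \<bar>v 0\<bar>) (\<lambda>x. x) \<le> lp_norm M p nrm f"
proof -
  note measurable_coordinate[OF M din, measurable]
  define P where "P = real_of_ereal p"
  have P: "1 \<le> P" using one_le_real_of_ereal[OF p p'] by (simp add: P_def)
  define I where "I = (\<integral>\<^sup>+ x. ennreal (\<bar>x 0\<bar> powr P) \<partial>M)"
  have "(\<integral>\<^sup>+ x. ennreal (nrm (f x) powr P) \<partial>M) = (\<integral>\<^sup>+ x. ennreal (a powr P) * ennreal (\<bar>x 0\<bar> powr P) \<partial>M)"
    using f a by (intro nn_integral_cong) (simp add: powr_mult ennreal_mult')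
  also have "\<dots> = ennreal (a powr P) * I" unfolding I_def by (rule nn_integral_cmult) measurable
  finally have fI: "(\<integral>\<^sup>+ x. ennreal (nrm (f x) powr P) \<partial>M) = ennreal (a powr P) * I" .
  show ?thesis
  proof (cases "I = \<infinity>")
    case True
    then show ?thesis using p' a fI by (simp add: lp_norm_def P_def ennreal_mult_top)
  next
    case False
    have "enn2real (ennreal (a powr P) * I) powr (1 / P) = a * enn2real I powr (1 / P)"
      using a P by (simp add: enn2real_mult powr_mult powr_powr)
    then show ?thesis
      using p' False fI a
      by (simp add: lp_norm_def I_def[symmetric] P_def[symmetric] ennreal_mult' ennreal_mult_eq_top_iff)
  qed
qed

lemma lp_norm_ge_scaled_first_coordinate:
  assumes a: "0 < a" and f: "\<forall>x\<in>space M. nrm (f x) = a * \<bar>x 0\<bar>"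
  shows "ennreal a * lp_norm M p (\<lambda>v. \<bar>v 0\<bar>) (\<lambda>x. x) \<le> lp_norm M p nrm f"
  using lp_norm_infinity_ge_scaled_first_coordinate[where nrm=nrm and f=f, OF a f]
    lp_norm_finite_ge_scaled_first_coordinate[where nrm=nrm and f=f, OF _ a f]
  by (cases "p = \<infinity>") auto

end

lemma lp_norm_first_path_diff_ge:
  fixes M :: "vec measure"
  assumes M: "admissible_measure din M" and p: "1 \<le> p" and q: "1 \<le> q"
    and nonneg: "\<forall>x\<in>space M. \<forall>i<din. 0 \<le> x i" and arch: "arch L N din dout" and r: "1 \<le> r"
  defines "\<delta> \<equiv> r / (2 * real L)"
  shows "ennreal (real L * r ^ (L - 1) * \<delta> / 2) * lp_norm M p (\<lambda>v. \<bar>v 0\<bar>) (\<lambda>x. x)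
    \<le> lp_norm M p (qnorm dout q) (\<lambda>x. realize L N (first_path L r) x - realize L N (first_path L (r - \<delta>)) x)"
proof -
  have L: "1 \<le> L" and din: "0 < din" and dout: "1 \<le> dout"
    using arch arch_width_pos[OF arch, of 0] arch_width_pos[OF arch, of L] by (auto simp: arch_def)
  have \<delta>: "0 < \<delta>" "\<delta> \<le> r" using r L by (auto simp: \<delta>_def field_simps)
  define a where "a = r ^ L - (r - \<delta>) ^ L"
  have a: "real L * r ^ (L - 1) * \<delta> / 2 \<le> a"
    using power_diff_ge_half[of r L] r L by (simp add: a_def \<delta>_def)
  moreover have "0 < real L * r ^ (L - 1) * \<delta> / 2" using L \<delta> r by simp
  ultimately have a_pos: "0 < a" by linarith
  have "qnorm dout q (realize L N (first_path L r) x - realize L N (first_path L (r - \<delta>)) x) = a * \<bar>x 0\<bar>"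
    if x: "x \<in> space M" for x
  proof -
    have "0 \<le> x 0" using nonneg x din by auto
    then have "realize L N (first_path L r) x - realize L N (first_path L (r - \<delta>)) x = (\<lambda>i. if i = 0 then a * x 0 else 0)"
      using realize_first_path[OF arch] r \<delta> by (auto simp: fun_eq_iff a_def algebra_simps)
    then show ?thesis using qnorm_first_coordinate[OF q dout] a_pos by (simp add: abs_mult)
  qed
  then have "ennreal a * lp_norm M p (\<lambda>v. \<bar>v 0\<bar>) (\<lambda>x. x)
      \<le> lp_norm M p (qnorm dout q) (\<lambda>x. realize L N (first_path L r) x - realize L N (first_path L (r - \<delta>)) x)"
    by (intro lp_norm_ge_scaled_first_coordinate[OF M din p a_pos]) auto
  moreover have "ennreal (real L * r ^ (L - 1) * \<delta> / 2) \<le> ennreal a" using a by (rule ennreal_leI)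
  ultimately show ?thesis by (meson mult_right_mono order_trans zero_le)
qed

lemma realize_diff_lp_norm_ge:
  fixes M :: "vec measure"
  assumes M: "admissible_measure din M" and p: "1 \<le> p" and q: "1 \<le> q"
    and nonneg: "\<forall>x\<in>space M. \<forall>i<din. 0 \<le> x i" and arch: "arch L N din dout" and r: "1 \<le> r"
    and \<epsilon>: "0 < \<epsilon>" and V: "lp_norm M p (\<lambda>v. \<bar>v 0\<bar>) (\<lambda>x. x) < \<infinity>"
  defines "c \<equiv> enn2real (lp_norm M p (\<lambda>v. \<bar>v 0\<bar>) (\<lambda>x. x)) / 2"
  shows "\<exists>\<theta>\<in>param_ball q L N r. \<exists>\<theta>'\<in>param_ball q L N r. \<theta> \<noteq> \<theta>' \<and>
    lp_norm M p (qnorm dout q) (\<lambda>x. realize L N \<theta> x - realize L N \<theta>' x)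
      \<ge> ennreal ((1 - \<epsilon>) * c * real L * r ^ (L - 1) * param_sup L N (param_diff \<theta> \<theta>'))"
proof -
  have L: "1 \<le> L" using arch by (simp add: arch_def)
  define \<delta> where "\<delta> = r / (2 * real L)"
  have \<delta>: "0 < \<delta>" "\<delta> \<le> r" using r L by (auto simp: \<delta>_def field_simps)
  define W where "W = enn2real (lp_norm M p (\<lambda>v. \<bar>v 0\<bar>) (\<lambda>x. x))"
  have W: "lp_norm M p (\<lambda>v. \<bar>v 0\<bar>) (\<lambda>x. x) = ennreal W" "0 \<le> W"
    using V by (simp_all add: W_def less_top)
  define X where "X = real L * r ^ (L - 1) * \<delta> / 2 * W"
  have X: "0 \<le> X" using \<delta> r W by (simp add: X_def)
  have "(1 - \<epsilon>) * c * real L * r ^ (L - 1) * \<delta> = X - \<epsilon> * X"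
    by (simp add: X_def c_def W_def field_simps)
  also have "\<dots> \<le> X" using X \<epsilon> by simp
  finally have "ennreal ((1 - \<epsilon>) * c * real L * r ^ (L - 1) * \<delta>)
      \<le> ennreal (real L * r ^ (L - 1) * \<delta> / 2) * lp_norm M p (\<lambda>v. \<bar>v 0\<bar>) (\<lambda>x. x)"
    unfolding W(1) X_def using \<delta> r W(2) by (simp add: ennreal_mult'[symmetric] ennreal_leI)
  also have "\<dots> \<le> lp_norm M p (qnorm dout q) (\<lambda>x. realize L N (first_path L r) x - realize L N (first_path L (r - \<delta>)) x)"
    unfolding \<delta>_def by (rule lp_norm_first_path_diff_ge[OF M p q nonneg arch r])
  finally have "ennreal ((1 - \<epsilon>) * c * real L * r ^ (L - 1)
      * param_sup L N (param_diff (first_path L r) (first_path L (r - \<delta>))))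
    \<le> lp_norm M p (qnorm dout q) (\<lambda>x. realize L N (first_path L r) x - realize L N (first_path L (r - \<delta>)) x)"
    using param_sup_first_path_diff[OF arch, of "r - \<delta>" r] \<delta> by simp
  moreover have "first_path L r \<noteq> first_path L (r - \<delta>)"
    using L \<delta> by (auto simp: first_path_def fun_eq_iff dest: fun_cong[of _ _ 1])
  moreover have "first_path L r \<in> param_ball q L N r" "first_path L (r - \<delta>) \<in> param_ball q L N r"
    using first_path_in_param_ball[OF arch q] \<delta> r by auto
  ultimately show ?thesis by blast
qed

text \<open>The witnesses use only the first coordinate of every layer, so the restriction
  \<open>N 0 \<le> N l\<close> on the architecture is not needed.\<close>
lemma realize_Lipschitz_lower_bound:
  fixes M :: "vec measure"
  assumes p: "1 \<le> p" and q: "1 \<le> q" and M: "admissible_measure din M" and Cp: "Cp din M p < \<infinity>"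
    and nonneg: "\<forall>x\<in>space M. \<forall>i<din. 0 \<le> x i" and nonzero: "0 < emeasure M {x \<in> space M. x 0 \<noteq> 0}"
  shows "\<exists>c'>0. \<forall>L N. arch L N din dout \<and> (p \<noteq> \<infinity> \<longrightarrow> (\<forall>l\<le>L. N 0 \<le> N l)) \<longrightarrow>
         (\<forall>r\<ge>1. \<forall>\<epsilon>>0. \<exists>\<theta>\<in>param_ball q L N r. \<exists>\<theta>'\<in>param_ball q L N r. \<theta> \<noteq> \<theta>' \<and>
            lp_norm M p (qnorm dout q) (\<lambda>x. realize L N \<theta> x - realize L N \<theta>' x)
              \<ge> ennreal ((1 - \<epsilon>) * c' * real L * r ^ (L - 1) * param_sup L N (param_diff \<theta> \<theta>')))"
proof (cases "din = 0")
  case True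
  then show ?thesis by (intro exI[of _ 1]) (auto simp: arch_def)
next
  case False
  define V where "V = lp_norm M p (\<lambda>v. \<bar>v 0\<bar>) (\<lambda>x. x)"
  have V: "0 < V" "V < \<infinity>"
    using lp_norm_first_coordinate_pos[OF M _ p nonzero] lp_norm_first_coordinate_finite[OF M _ p Cp] False
    by (simp_all add: V_def)
  then have c: "0 < enn2real V / 2" by (simp add: enn2real_positive_iff less_top)
  show ?thesis
  proof (intro exI[of _ "enn2real V / 2"] conjI c allI impI)
    fix L N and r \<epsilon> :: real
    assume "arch L N din dout \<and> (p \<noteq> \<infinity> \<longrightarrow> (\<forall>l\<le>L. N 0 \<le> N l))" "1 \<le> r" "0 < \<epsilon>"
    then show "\<exists>\<theta>\<in>param_ball q L N r. \<exists>\<theta>'\<in>param_ball q L N r. \<theta> \<noteq> \<theta>' \<and>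
      lp_norm M p (qnorm dout q) (\<lambda>x. realize L N \<theta> x - realize L N \<theta>' x)
        \<ge> ennreal ((1 - \<epsilon>) * (enn2real V / 2) * real L * r ^ (L - 1) * param_sup L N (param_diff \<theta> \<theta>'))"
      unfolding V_def using realize_diff_lp_norm_ge[OF M p q nonneg _ _ _ V(2)[unfolded V_def]] by simp
  qed
qed

theorem mainTheorem2:
  fixes din dout :: nat and p q :: ereal
  assumes p: "1 \<le> p" and q: "1 \<le> q"
  shows
   "(\<forall>M nrm. admissible_measure din M \<and> Cp din M p < \<infinity> \<and> is_norm_on dout nrm \<longrightarrow>
      (\<exists>c>0. \<forall>L N. arch L N din dout \<longrightarrow> (\<forall>r\<ge>1. \<forall>\<theta>\<in>param_ball q L N r. \<forall>\<theta>'\<in>param_ball q L N r.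
          lp_norm M p nrm (\<lambda>x. realize L N \<theta> x - realize L N \<theta>' x)
            \<le> ennreal (c * real (width L N) * real L ^ 2 * r ^ (L - 1)
                        * param_sup L N (param_diff \<theta> \<theta>')))))
    \<and> (\<forall>D>0. p = \<infinity> \<longrightarrow>
      (\<forall>L N. arch L N din dout \<longrightarrow> (\<forall>r\<ge>1. \<forall>\<theta>\<in>param_ball q L N r. \<forall>\<theta>'\<in>param_ball q L N r.
          lp_norm (cube_lebesgue din D) p (qnorm dout q) (\<lambda>x. realize L N \<theta> x - realize L N \<theta>' x)
            \<le> ennreal ((D * real din powr inv_exp q + 1) * real (width L N) * real L ^ 2 * r ^ (L - 1)
                        * param_sup L N (param_diff \<theta> \<theta>')))))
    \<and> (\<forall>D>0. q = \<infinity> \<longrightarrow>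
      (\<forall>L N. arch L N din dout \<longrightarrow> (\<forall>r\<ge>1. \<forall>\<theta>\<in>param_ball q L N r. \<forall>\<theta>'\<in>param_ball q L N r.
          lp_norm (cube_lebesgue din D) p (qnorm dout \<infinity>) (\<lambda>x. realize L N \<theta> x - realize L N \<theta>' x)
            \<le> ennreal ((D + 1) * (2 * D) powr (real din * inv_exp p) * real (width L N) * real L ^ 2
                        * r ^ (L - 1) * param_sup L N (param_diff \<theta> \<theta>')))))
    \<and> (\<forall>M. admissible_measure din M \<and> Cp din M p < \<infinity> \<and>
          (\<forall>x\<in>space M. \<forall>i<din. 0 \<le> x i) \<and>
          emeasure M {x \<in> space M. x 0 \<noteq> 0} > 0 \<longrightarrow>
      (\<exists>c'>0. \<forall>L N. arch L N din dout \<and> (p \<noteq> \<infinity> \<longrightarrow> (\<forall>l\<le>L. N 0 \<le> N l)) \<longrightarrow>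
         (\<forall>r\<ge>1. \<forall>\<epsilon>>0. \<exists>\<theta>\<in>param_ball q L N r. \<exists>\<theta>'\<in>param_ball q L N r. \<theta> \<noteq> \<theta>' \<and>
            lp_norm M p (qnorm dout q) (\<lambda>x. realize L N \<theta> x - realize L N \<theta>' x)
              \<ge> ennreal ((1 - \<epsilon>) * c' * real L * r ^ (L - 1)
                          * param_sup L N (param_diff \<theta> \<theta>')))))"
  by (intro conjI allI impI ballI; (elim conjE)?)
    (fact realize_Lipschitz_Lp[OF _ p _ _ q] realize_Lipschitz_cube_esssup[OF q]
      realize_Lipschitz_cube_sup_norm[OF p] realize_Lipschitz_lower_bound[OF p q])+

end
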